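(* Let $F(\xi,\eta,\zeta)$ be a homogeneous polynomial of degree $n\geq2$ defining a smooth plane curve $C\subset\mathbb{C}P_2$, and let $m\geq 0$. Let $S_m$ denote the space of homogeneous polynomials of degree $m$ in $x,y,z$ satisfying $F(\partial_x,\partial_y,\partial_z)\phi=0$. Then $\dim S_m=r_m$, where $r_m=mn+1-\tfrac12(n-1)(n-2)$ if $m\geq n$ and $r_m=\binom{m+2}{2}$ if $m<n$; moreover there exist points $[\xi_i:\eta_i:\zeta_i]\in C$, $1\le i\le r_m$, such that the polynomials $(\xi_i x+\eta_i y+\zeta_i z)^m$, $1\le i\le r_m$, form a basis of $S_m$. *)

theory Defs
  imports Complex_Main "HOL-Library.Function_Algebras"
begin

text \<open>Polynomials in the three variables x, y, z over the complex numbers are represented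
  by their coefficient functions: p (a,b,c) is the coefficient of x^a y^b z^c.
  (Only finitely supported functions are polynomials; all polynomials used here are
  homogeneous of a fixed degree, hence finitely supported.)\<close>

type_synonym poly3 = "nat \<times> nat \<times> nat \<Rightarrow> complex"

definition monoms :: "nat \<Rightarrow> (nat \<times> nat \<times> nat) set" where
  "monoms d = {(a,b,c). a + b + c = d}"

definition homog :: "nat \<Rightarrow> poly3 \<Rightarrow> bool" where
  "homog d p \<longleftrightarrow> (\<forall>a b c. p (a,b,c) \<noteq> 0 \<longrightarrow> a + b + c = d)"

definition eval3 :: "nat \<Rightarrow> poly3 \<Rightarrow> complex \<Rightarrow> complex \<Rightarrow> complex \<Rightarrow> complex" where
  "eval3 d p x y z = (\<Sum>(a,b,c)\<in>monoms d. p (a,b,c) * x ^ a * y ^ b * z ^ c)"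

definition pdx :: "poly3 \<Rightarrow> poly3" where
  "pdx p = (\<lambda>(a,b,c). of_nat (a+1) * p (a+1,b,c))"
definition pdy :: "poly3 \<Rightarrow> poly3" where
  "pdy p = (\<lambda>(a,b,c). of_nat (b+1) * p (a,b+1,c))"
definition pdz :: "poly3 \<Rightarrow> poly3" where
  "pdz p = (\<lambda>(a,b,c). of_nat (c+1) * p (a,b,c+1))"

definition smooth_curve_poly :: "nat \<Rightarrow> poly3 \<Rightarrow> bool" where
  "smooth_curve_poly n F \<longleftrightarrow> homog n F \<and> F \<noteq> (\<lambda>_. 0) \<and>
     (\<forall>x y z. (x,y,z) \<noteq> (0,0,0) \<longrightarrow>
        \<not> (eval3 n F x y z = 0 \<and> eval3 (n-1) (pdx F) x y z = 0 \<and>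
           eval3 (n-1) (pdy F) x y z = 0 \<and> eval3 (n-1) (pdz F) x y z = 0))"

definition diffop :: "nat \<Rightarrow> poly3 \<Rightarrow> poly3 \<Rightarrow> poly3" where
  "diffop n F phi = (\<lambda>t. \<Sum>(a,b,c)\<in>monoms n.
      F (a,b,c) * ((pdx ^^ a) ((pdy ^^ b) ((pdz ^^ c) phi))) t)"

definition S_space :: "nat \<Rightarrow> poly3 \<Rightarrow> nat \<Rightarrow> poly3 set" where
  "S_space n F m = {phi. homog m phi \<and> diffop n F phi = (\<lambda>_. 0)}"

definition pmult :: "poly3 \<Rightarrow> poly3 \<Rightarrow> poly3" where
  "pmult p q = (\<lambda>(i,j,k). \<Sum>a\<le>i. \<Sum>b\<le>j. \<Sum>c\<le>k. p (a,b,c) * q (i-a, j-b, k-c))"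

definition pone :: poly3 where
  "pone = (\<lambda>t. if t = (0,0,0) then 1 else 0)"

definition linform :: "complex \<Rightarrow> complex \<Rightarrow> complex \<Rightarrow> poly3" where
  "linform \<xi> \<eta> \<zeta> = (\<lambda>t. if t = (1,0,0) then \<xi> else if t = (0,1,0) then \<eta>
                         else if t = (0,0,1) then \<zeta> else 0)"

definition ppow :: "poly3 \<Rightarrow> nat \<Rightarrow> poly3" where
  "ppow p m = (pmult p ^^ m) pone"

definition cscale :: "complex \<Rightarrow> poly3 \<Rightarrow> poly3" where
  "cscale c f = (\<lambda>t. c * f t)"

lemma vector_space_cscale: "vector_space cscale"
  by unfold_locales (auto simp: cscale_def algebra_simps)

definition r_num :: "nat \<Rightarrow> nat \<Rightarrow> nat" where
  "r_num n m = (if m \<ge> n then m * n + 1 - ((n - 1) * (n - 2)) div 2 else (m + 2) choose 2)"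

end

theory Submission
  imports Defs "Subresultants.Subresultant_Gcd" "HOL-Computational_Algebra.Computational_Algebra"
    "HOL-Computational_Algebra.Field_as_Ring"
    "HOL-Library.Product_Lexorder" "HOL-Library.Product_Plus"
begin

text \<open>
  Upper bound: let x^\<alpha> be the lexicographically largest monomial of F. The equation
  F(\<partial>) \<phi> = 0 expresses the coefficient of \<phi> at x^(\<beta> + \<alpha>) through coefficients at smaller
  monomials, so \<phi> \<in> S_m is determined by its coefficients at the monomials of degree m not
  divisible by x^\<alpha>; hence dim S_m \<le> C(m+2,2) - C(m-n+2,2) = r_m.

  Lower bound: for p on C the power (p1 x + p2 y + p3 z)^m lies in S_m, and under the apolarity
  pairing it pairs with a form g to m! g(p). So the forms orthogonal to all these powers are the
  forms vanishing on C, which by smoothness are the multiples of F: in an affine chart F becomes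
  a polynomial in t over C[s] with nonzero discriminant (a repeated factor would give a singular
  point), so for generic s its n roots are simple and a pseudo-remainder vanishing at them is
  zero. Hence the powers span a space of dimension at least r_m, and a maximal independent
  family of them is a basis of S_m.
\<close>

lemma finite_monoms [simp]: "finite (monoms d)"
proof -
  have "monoms d \<subseteq> {..d} \<times> {..d} \<times> {..d}" by (auto simp: monoms_def)
  then show ?thesis by (rule finite_subset) auto
qed

lemma mem_monoms [simp]: "(a, b, c) \<in> monoms d \<longleftrightarrow> a + b + c = d"
  by (simp add: monoms_def)

definition monom_dvd :: "nat \<times> nat \<times> nat \<Rightarrow> nat \<times> nat \<times> nat \<Rightarrow> bool" where
  "monom_dvd \<alpha> \<gamma> \<longleftrightarrow> (\<exists>\<beta>. \<gamma> = \<beta> + \<alpha>)"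

lemma monom_dvd_iff [simp]: "monom_dvd (u, v, w) (i, j, k) \<longleftrightarrow> u \<le> i \<and> v \<le> j \<and> w \<le> k"
proof
  assume "monom_dvd (u, v, w) (i, j, k)"
  then obtain p q r where "(i, j, k) = (p, q, r) + (u, v, w)"
    unfolding monom_dvd_def by (metis prod.exhaust)
  then show "u \<le> i \<and> v \<le> j \<and> w \<le> k" by simp
next
  assume "u \<le> i \<and> v \<le> j \<and> w \<le> k"
  then have "(i, j, k) = (i - u, j - v, k - w) + (u, v, w)" by simp
  then show "monom_dvd (u, v, w) (i, j, k)" unfolding monom_dvd_def ..
qed

lemma monoms_multiples:
  assumes "\<alpha> \<in> monoms e"
  shows "{\<gamma> \<in> monoms (d + e). monom_dvd \<alpha> \<gamma>} = (\<lambda>\<beta>. \<beta> + \<alpha>) ` monoms d"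
  using assms by (cases \<alpha>) (force simp: monoms_def monom_dvd_def)

lemma sum_monoms_shift:
  assumes "\<alpha> \<in> monoms e" and "\<And>\<gamma>. \<gamma> \<in> monoms (d + e) \<Longrightarrow> \<not> monom_dvd \<alpha> \<gamma> \<Longrightarrow> f \<gamma> = 0"
  shows "(\<Sum>\<beta>\<in>monoms d. f (\<beta> + \<alpha>)) = (\<Sum>\<gamma>\<in>monoms (d + e). f \<gamma>)"
proof -
  have "(\<Sum>\<beta>\<in>monoms d. f (\<beta> + \<alpha>)) = (\<Sum>\<gamma>\<in>(\<lambda>\<beta>. \<beta> + \<alpha>) ` monoms d. f \<gamma>)"
    by (simp add: sum.reindex inj_on_def)
  also have "\<dots> = (\<Sum>\<gamma>\<in>monoms (d + e). f \<gamma>)"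
    using assms by (intro sum.mono_neutral_left) (auto simp flip: monoms_multiples)
  finally show ?thesis .
qed

lemma card_monoms: "card (monoms d) = (d + 2) choose 2"
proof (induction d)
  case 0
  have "monoms 0 = {(0, 0, 0)}" by (auto simp: monoms_def)
  then show ?case by (simp add: choose_two)
next
  case (Suc d)
  let ?A = "(\<lambda>b. (0, b, Suc d - b)) ` {..Suc d}" and ?B = "(\<lambda>\<beta>. \<beta> + (1, 0, 0)) ` monoms d"
  have "?B = {\<gamma> \<in> monoms (Suc d). monom_dvd (1, 0, 0) \<gamma>}"
    using monoms_multiples[of "(1, 0, 0)" 1 d] by simp
  moreover have "\<gamma> \<in> ?A" if "\<gamma> \<in> monoms (Suc d)" "\<not> monom_dvd (1, 0, 0) \<gamma>" for \<gamma>
    using that by (cases \<gamma>) force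
  ultimately have split: "monoms (Suc d) = ?A \<union> ?B" by auto
  have "card ?A = Suc (Suc d)" by (subst card_image) (auto intro: inj_onI)
  moreover have "card ?B = card (monoms d)" by (subst card_image) (auto simp: inj_on_def)
  ultimately have "card (monoms (Suc d)) = Suc (Suc d) + card (monoms d)"
    unfolding split by (subst card_Un_disjoint) auto
  then show ?case using Suc by (simp add: numeral_2_eq_2)
qed

lemma pmult_eq_sum_box:
  "pmult p q (i, j, k) = (\<Sum>(a, b, c)\<in>{..i} \<times> {..j} \<times> {..k}. p (a, b, c) * q (i - a, j - b, k - c))"
  by (simp add: pmult_def sum.cartesian_product)

lemma pmult_linform:
  "pmult (linform \<xi> \<eta> \<zeta>) p (i, j, k) =
     (if i > 0 then \<xi> * p (i - 1, j, k) else 0) + (if j > 0 then \<eta> * p (i, j - 1, k) else 0)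
     + (if k > 0 then \<zeta> * p (i, j, k - 1) else 0)"
proof -
  let ?box = "{..i} \<times> {..j} \<times> {..k}"
  define q where "q = (\<lambda>(a, b, c). p (i - a, j - b, k - c))"
  have "linform \<xi> \<eta> \<zeta> t * q t = (if t = (1, 0, 0) then \<xi> * q t else 0) +
      (if t = (0, 1, 0) then \<eta> * q t else 0) + (if t = (0, 0, 1) then \<zeta> * q t else 0)" for t
    by (simp add: linform_def)
  then have "pmult (linform \<xi> \<eta> \<zeta>) p (i, j, k) =
      (\<Sum>t\<in>?box. if t = (1, 0, 0) then \<xi> * q t else 0) +
      (\<Sum>t\<in>?box. if t = (0, 1, 0) then \<eta> * q t else 0) +
      (\<Sum>t\<in>?box. if t = (0, 0, 1) then \<zeta> * q t else 0)"
    unfolding pmult_eq_sum_box q_def by (simp only: case_prod_beta' prod.collapse sum.distrib)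
  also have "\<dots> = (if i > 0 then \<xi> * p (i - 1, j, k) else 0) + (if j > 0 then \<eta> * p (i, j - 1, k) else 0)
     + (if k > 0 then \<zeta> * p (i, j, k - 1) else 0)"
    by (simp add: q_def Suc_le_eq)
  finally show ?thesis .
qed

definition multinomial3 :: "nat \<Rightarrow> nat \<Rightarrow> nat \<Rightarrow> complex" where
  "multinomial3 a b c = fact (a + b + c) / (fact a * fact b * fact c)"

lemma of_nat_mult_fact_div:
  "(of_nat a * fact N / (fact a * B) :: complex) = (if a > 0 then fact N / (fact (a - 1) * B) else 0)"
  by (cases a) (simp_all add: field_simps del: of_nat_Suc)

lemma multinomial3_rec:
  assumes "a + b + c = Suc N"
  shows "multinomial3 a b c = (if a > 0 then multinomial3 (a - 1) b c else 0)
    + (if b > 0 then multinomial3 a (b - 1) c else 0) + (if c > 0 then multinomial3 a b (c - 1) else 0)"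
proof -
  let ?t = "\<lambda>x. of_nat x * fact N / (fact a * fact b * fact c) :: complex"
  have "multinomial3 a b c = of_nat (a + b + c) * fact N / (fact a * fact b * fact c)"
    using assms by (simp add: multinomial3_def)
  also have "\<dots> = ?t a + ?t b + ?t c"
    by (simp add: add_divide_distrib distrib_right)
  also have "\<dots> = (if a > 0 then multinomial3 (a - 1) b c else 0)
    + (if b > 0 then multinomial3 a (b - 1) c else 0) + (if c > 0 then multinomial3 a b (c - 1) else 0)"
    using of_nat_mult_fact_div[of a N "fact b * fact c"] of_nat_mult_fact_div[of b N "fact a * fact c"]
      of_nat_mult_fact_div[of c N "fact a * fact b"] assms
    by (auto simp: multinomial3_def ac_simps)
  finally show ?thesis .
qed

lemma ppow_Suc: "ppow p (Suc m) = pmult p (ppow p m)"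
  by (simp add: ppow_def)

lemma ppow_linform:
  "ppow (linform \<xi> \<eta> \<zeta>) m (a, b, c) =
     (if a + b + c = m then multinomial3 a b c * \<xi> ^ a * \<eta> ^ b * \<zeta> ^ c else 0)"
proof (induction m arbitrary: a b c)
  case 0
  then show ?case by (simp add: ppow_def pone_def multinomial3_def)
next
  case (Suc m)
  let ?L = "linform \<xi> \<eta> \<zeta>" and ?e = "\<lambda>u. if a + b + c = Suc m then u * \<xi> ^ a * \<eta> ^ b * \<zeta> ^ c else 0"
  have "ppow ?L (Suc m) (a, b, c) = (if a > 0 then \<xi> * ppow ?L m (a - 1, b, c) else 0)
      + (if b > 0 then \<eta> * ppow ?L m (a, b - 1, c) else 0) + (if c > 0 then \<zeta> * ppow ?L m (a, b, c - 1) else 0)"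
    by (simp only: ppow_Suc pmult_linform)
  also have "\<dots> = ?e (if a > 0 then multinomial3 (a - 1) b c else 0)
      + ?e (if b > 0 then multinomial3 a (b - 1) c else 0) + ?e (if c > 0 then multinomial3 a b (c - 1) else 0)"
    by (cases a; cases b; cases c) (auto simp: Suc.IH)
  also have "\<dots> = ?e (multinomial3 a b c)"
    by (cases "a + b + c = Suc m") (simp_all add: multinomial3_rec algebra_simps)
  finally show ?case .
qed

lemma pdx_power: "(pdx ^^ a) p (i, j, k) = fact (i + a) / fact i * p (i + a, j, k)"
proof (induction a arbitrary: i)
  case (Suc a)
  have "(pdx ^^ Suc a) p (i, j, k) = of_nat (Suc i) * (fact (Suc i + a) / fact (Suc i)) * p (i + Suc a, j, k)"
    by (simp add: pdx_def Suc.IH)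
  then show ?case by (simp add: field_simps del: of_nat_Suc)
qed simp

lemma pdy_power: "(pdy ^^ b) p (i, j, k) = fact (j + b) / fact j * p (i, j + b, k)"
proof (induction b arbitrary: j)
  case (Suc b)
  have "(pdy ^^ Suc b) p (i, j, k) = of_nat (Suc j) * (fact (Suc j + b) / fact (Suc j)) * p (i, j + Suc b, k)"
    by (simp add: pdy_def Suc.IH)
  then show ?case by (simp add: field_simps del: of_nat_Suc)
qed simp

lemma pdz_power: "(pdz ^^ c) p (i, j, k) = fact (k + c) / fact k * p (i, j, k + c)"
proof (induction c arbitrary: k)
  case (Suc c)
  have "(pdz ^^ Suc c) p (i, j, k) = of_nat (Suc k) * (fact (Suc k + c) / fact (Suc k)) * p (i, j, k + Suc c)"
    by (simp add: pdz_def Suc.IH)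
  then show ?case by (simp add: field_simps del: of_nat_Suc)
qed simp

lemma diffop_apply:
  "diffop n F \<phi> (i, j, k) = (\<Sum>(a, b, c)\<in>monoms n.
     F (a, b, c) * (fact (i + a) / fact i) * (fact (j + b) / fact j) * (fact (k + c) / fact k)
       * \<phi> (i + a, j + b, k + c))"
  unfolding diffop_def by (intro sum.cong refl) (auto simp: pdx_power pdy_power pdz_power ac_simps)

lemma diffop_ppow_linform:
  "diffop n F (ppow (linform \<xi> \<eta> \<zeta>) m) (i, j, k) =
     (if i + j + k + n = m then fact m / (fact i * fact j * fact k) * \<xi> ^ i * \<eta> ^ j * \<zeta> ^ k else 0)
     * eval3 n F \<xi> \<eta> \<zeta>"
proof -
  have "F (a, b, c) * (fact (i + a) / fact i) * (fact (j + b) / fact j) * (fact (k + c) / fact k)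
      * ppow (linform \<xi> \<eta> \<zeta>) m (i + a, j + b, k + c)
    = (if i + j + k + n = m then fact m / (fact i * fact j * fact k) * \<xi> ^ i * \<eta> ^ j * \<zeta> ^ k else 0)
      * (F (a, b, c) * \<xi> ^ a * \<eta> ^ b * \<zeta> ^ c)" if "a + b + c = n" for a b c
  proof (cases "i + j + k + n = m")
    case True
    then have "i + a + (j + b) + (k + c) = m" using that by simp
    then show ?thesis using True by (simp add: ppow_linform multinomial3_def power_add field_simps)
  qed (use that in \<open>simp add: ppow_linform\<close>)
  then show ?thesis
    unfolding diffop_apply eval3_def sum_distrib_left by (intro sum.cong) auto
qed

lemma homog_ppow_linform: "homog m (ppow (linform \<xi> \<eta> \<zeta>) m)"
  by (auto simp: homog_def ppow_linform split: if_splits)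

lemma ppow_linform_mem_S_space:
  assumes "eval3 n F \<xi> \<eta> \<zeta> = 0"
  shows "ppow (linform \<xi> \<eta> \<zeta>) m \<in> S_space n F m"
  using assms by (auto simp: S_space_def homog_ppow_linform diffop_ppow_linform)

section \<open>Linear algebra\<close>

context vector_space
begin

lemma linear_on_sum_scale:
  assumes "subspace V"
    and add: "\<And>x y. x \<in> V \<Longrightarrow> y \<in> V \<Longrightarrow> h (x + y) = h x + h y"
    and scale: "\<And>c x. x \<in> V \<Longrightarrow> h (c *s x) = c *s h x"
    and "finite B" "B \<subseteq> V"
  shows "h (\<Sum>v\<in>B. u v *s v) = (\<Sum>v\<in>B. u v *s h v)"
  using \<open>finite B\<close> \<open>B \<subseteq> V\<close>
proof (induction B rule: finite_induct)
  case empty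
  have "h 0 = h (0 *s 0)" by simp
  also have "\<dots> = 0 *s h 0" using scale subspace_0[OF \<open>subspace V\<close>] by blast
  finally show ?case by simp
next
  case (insert x B)
  then have "(\<Sum>v\<in>B. u v *s v) \<in> V" "u x *s x \<in> V"
    using \<open>subspace V\<close> by (auto intro!: subspace_sum subspace_scale)
  with insert show ?case by (simp add: add scale)
qed

lemma dim_le_card_of_inj_on:
  assumes "subspace V"
    and add: "\<And>x y. x \<in> V \<Longrightarrow> y \<in> V \<Longrightarrow> h (x + y) = h x + h y"
    and scale: "\<And>c x. x \<in> V \<Longrightarrow> h (c *s x) = c *s h x"
    and "inj_on h V" "h ` V \<subseteq> span U" "finite U"
  shows "dim V \<le> card U"
proof -
  obtain B where B: "B \<subseteq> V" "independent B" "V \<subseteq> span B" "card B = dim V"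
    using basis_exists by blast
  have h0: "h 0 = 0"
    using scale[OF subspace_0[OF \<open>subspace V\<close>], of 0] by simp
  have "independent (h ` B)"
    unfolding independent_explicit_finite_subsets
  proof (intro allI impI ballI)
    fix S u v assume S: "S \<subseteq> h ` B" "finite S" and u: "(\<Sum>w\<in>S. u w *s w) = 0" and "v \<in> S"
    then obtain T where T: "T \<subseteq> B" "S = h ` T" by (auto simp: subset_image_iff)
    have inj: "inj_on h T" using \<open>inj_on h V\<close> T B(1) by (blast intro: inj_on_subset)
    then have "finite T" using S T by (simp add: finite_image_iff)
    have "h (\<Sum>t\<in>T. u (h t) *s t) = (\<Sum>t\<in>T. u (h t) *s h t)"
      using T B(1) \<open>finite T\<close> by (intro linear_on_sum_scale[OF \<open>subspace V\<close> add scale]) auto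
    also have "\<dots> = (\<Sum>w\<in>S. u w *s w)" unfolding T(2) by (simp add: sum.reindex[OF inj])
    finally have "h (\<Sum>t\<in>T. u (h t) *s t) = h 0" using u h0 by simp
    moreover have "(\<Sum>t\<in>T. u (h t) *s t) \<in> V"
      using T(1) B(1) by (intro subspace_sum[OF \<open>subspace V\<close>] subspace_scale[OF \<open>subspace V\<close>]) auto
    ultimately have "(\<Sum>t\<in>T. u (h t) *s t) = 0"
      using inj_onD[OF \<open>inj_on h V\<close>] subspace_0[OF \<open>subspace V\<close>] by blast
    then show "u v = 0"
      using B(2) \<open>finite T\<close> T \<open>v \<in> S\<close> by (auto dest: independentD)
  qed
  then have "card (h ` B) \<le> card U"
    using independent_span_bound[OF \<open>finite U\<close>] B(1) \<open>h ` V \<subseteq> span U\<close> by blast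
  moreover have "card (h ` B) = card B"
    using \<open>inj_on h V\<close> B(1) by (blast intro: card_image inj_on_subset)
  ultimately show ?thesis using B(4) by simp
qed

lemma dim_le_dim_of_subset:
  assumes "A \<subseteq> C" "C \<subseteq> span W" "finite W"
  shows "dim A \<le> dim C"
proof -
  obtain BA where BA: "BA \<subseteq> A" "independent BA" "A \<subseteq> span BA" "card BA = dim A"
    using basis_exists by blast
  obtain BC where BC: "BC \<subseteq> C" "independent BC" "C \<subseteq> span BC" "card BC = dim C"
    using basis_exists by blast
  have "finite BC"
    using independent_span_bound[OF \<open>finite W\<close> BC(2)] BC(1) assms(2) by blast
  then show ?thesis
    using independent_span_bound[OF _ BA(2), of BC] BA BC assms(1) by auto
qed

lemma card_le_dim_of_independent:
  assumes "B \<subseteq> S" "independent B" "S \<subseteq> span W" "finite W"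
  shows "card B \<le> dim S"
  using dim_le_dim_of_subset[of B S W] assms by (simp add: dim_eq_card_independent)

lemma span_eq_of_card_ge_dim:
  assumes "subspace S" "S \<subseteq> span W" "finite W"
    and B: "B \<subseteq> S" "independent B" "dim S \<le> card B"
  shows "span B = S"
proof
  show "span B \<subseteq> S" using B(1) \<open>subspace S\<close> by (rule span_minimal)
  have "finite B"
    using independent_span_bound[OF \<open>finite W\<close> B(2)] B(1) assms(2) by blast
  show "S \<subseteq> span B"
  proof
    fix a assume "a \<in> S"
    show "a \<in> span B"
    proof (rule ccontr)
      assume a: "a \<notin> span B"
      then have "a \<notin> B" using span_base by blast
      have "card (insert a B) \<le> dim S"
        using \<open>a \<in> S\<close> B a assms(2,3)
        by (intro card_le_dim_of_independent independent_insertI) auto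
      with \<open>finite B\<close> \<open>a \<notin> B\<close> B(3) show False by simp
    qed
  qed
qed

lemma subspace_kernels_on:
  assumes "subspace V"
    and add: "\<And>t x y. t \<in> T \<Longrightarrow> x \<in> V \<Longrightarrow> y \<in> V \<Longrightarrow> l t (x + y) = l t x + l t y"
    and scale: "\<And>t c x. t \<in> T \<Longrightarrow> x \<in> V \<Longrightarrow> l t (c *s x) = c * l t x"
  shows "subspace {v \<in> V. \<forall>t\<in>T. l t v = 0}"
proof -
  have "l t 0 = 0" if "t \<in> T" for t
    using scale[OF that, of 0 0] \<open>subspace V\<close> by (simp add: subspace_0)
  then show ?thesis
    using \<open>subspace V\<close> unfolding subspace_def by (auto simp: add scale)
qed

lemma dim_le_dim_kernel_add_one:
  assumes "subspace V" "V \<subseteq> span W" "finite W"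
    and add: "\<And>x y. x \<in> V \<Longrightarrow> y \<in> V \<Longrightarrow> l (x + y) = l x + l y"
    and scale: "\<And>c x. x \<in> V \<Longrightarrow> l (c *s x) = c * l x"
  shows "dim V \<le> dim {v \<in> V. l v = 0} + 1"
proof (cases "\<forall>v\<in>V. l v = 0")
  case True
  then have "{v \<in> V. l v = 0} = V" by auto
  then show ?thesis by simp
next
  case False
  then obtain v0 where v0: "v0 \<in> V" "l v0 \<noteq> 0" by auto
  obtain B where B: "B \<subseteq> {v \<in> V. l v = 0}" "independent B" "{v \<in> V. l v = 0} \<subseteq> span B"
    "card B = dim {v \<in> V. l v = 0}"
    using basis_exists by blast
  have "finite B"
    using independent_span_bound[OF \<open>finite W\<close> B(2)] B(1) assms(2) by blast
  have "V \<subseteq> span (insert v0 B)"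
  proof
    fix v assume "v \<in> V"
    define w where "w = v - (l v / l v0) *s v0"
    have "w \<in> V" using \<open>v \<in> V\<close> v0(1) \<open>subspace V\<close> by (simp add: w_def subspace_diff subspace_scale)
    have "l v = l (w + (l v / l v0) *s v0)" by (simp add: w_def)
    also have "\<dots> = l w + l v"
      using \<open>w \<in> V\<close> v0 \<open>subspace V\<close> by (simp add: add scale subspace_scale)
    finally have "w \<in> span B" using B(3) \<open>w \<in> V\<close> by auto
    then have "w + (l v / l v0) *s v0 \<in> span (insert v0 B)"
      by (intro span_add span_scale) (auto intro: span_base span_mono[THEN subsetD, of B])
    then show "v \<in> span (insert v0 B)" by (simp add: w_def)
  qed
  then have "dim V \<le> card (insert v0 B)" using \<open>finite B\<close> by (intro dim_le_card) auto
  also have "\<dots> \<le> card B + 1" using \<open>finite B\<close> by (simp add: card_insert_if)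
  finally show ?thesis using B(4) by simp
qed

lemma dim_le_dim_kernels_add_card:
  assumes "subspace V" "V \<subseteq> span W" "finite W" "finite T"
    and add: "\<And>t x y. t \<in> T \<Longrightarrow> x \<in> V \<Longrightarrow> y \<in> V \<Longrightarrow> l t (x + y) = l t x + l t y"
    and scale: "\<And>t c x. t \<in> T \<Longrightarrow> x \<in> V \<Longrightarrow> l t (c *s x) = c * l t x"
  shows "dim V \<le> dim {v \<in> V. \<forall>t\<in>T. l t v = 0} + card T"
  using \<open>finite T\<close> add scale
proof (induction T rule: finite_induct)
  case (insert t T)
  let ?K = "{v \<in> V. \<forall>s\<in>T. l s v = 0}"
  have "subspace ?K"
    using insert.prems by (intro subspace_kernels_on[OF \<open>subspace V\<close>]) auto
  moreover have "?K \<subseteq> span W" using assms(2) by auto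
  ultimately have "dim ?K \<le> dim {v \<in> ?K. l t v = 0} + 1"
    using insert.prems by (intro dim_le_dim_kernel_add_one[OF _ _ \<open>finite W\<close>]) auto
  moreover have "{v \<in> ?K. l t v = 0} = {v \<in> V. \<forall>s\<in>insert t T. l s v = 0}" by auto
  moreover have "dim V \<le> dim ?K + card T" using insert by blast
  ultimately show ?case using insert by simp
qed simp

end

interpretation cs: vector_space cscale
  by (rule vector_space_cscale)

lemma diffop_add: "diffop n F (f + g) = diffop n F f + diffop n F g"
proof (rule ext, clarify)
  fix i j k
  show "diffop n F (f + g) (i, j, k) = (diffop n F f + diffop n F g) (i, j, k)"
    unfolding plus_fun_apply diffop_apply sum.distrib[symmetric]
    by (intro sum.cong) (auto simp: algebra_simps add_divide_distrib)
qed

lemma diffop_cscale: "diffop n F (cscale c f) = cscale c (diffop n F f)"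
proof (rule ext, clarify)
  fix i j k
  show "diffop n F (cscale c f) (i, j, k) = cscale c (diffop n F f) (i, j, k)"
    unfolding cscale_def diffop_apply sum_distrib_left by (intro sum.cong) (auto simp: algebra_simps)
qed

lemma homog_add: "homog m f \<Longrightarrow> homog m g \<Longrightarrow> homog m (f + g)"
  unfolding homog_def by (metis add.right_neutral plus_fun_apply)

lemma homog_diff: "homog m f \<Longrightarrow> homog m g \<Longrightarrow> homog m (f - g)"
  unfolding homog_def by (metis diff_self minus_apply)

lemma homog_cscale: "homog m f \<Longrightarrow> homog m (cscale c f)"
  by (auto simp: homog_def cscale_def)

lemma subspace_S_space: "cs.subspace (S_space n F m)"
  unfolding cs.subspace_def S_space_def
  by (auto simp: homog_add homog_cscale diffop_add diffop_cscale)
    (auto simp: homog_def diffop_apply zero_fun_def cscale_def)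

definition forms :: "nat \<Rightarrow> poly3 set" where
  "forms d = {f. homog d f}"

lemma subspace_forms: "cs.subspace (forms d)"
  unfolding cs.subspace_def forms_def by (auto simp: homog_add homog_cscale) (simp add: homog_def)

lemma sum_fun_apply: "(\<Sum>i\<in>A. f i) x = (\<Sum>i\<in>A. f i x)"
  by (induction A rule: infinite_finite_induct) auto

definition monomial3 :: "nat \<times> nat \<times> nat \<Rightarrow> poly3" where
  "monomial3 \<alpha> = (\<lambda>\<beta>. if \<beta> = \<alpha> then 1 else 0)"

definition vanishes_outside :: "(nat \<times> nat \<times> nat) set \<Rightarrow> poly3 \<Rightarrow> bool" where
  "vanishes_outside E f \<longleftrightarrow> (\<forall>\<alpha>. \<alpha> \<notin> E \<longrightarrow> f \<alpha> = 0)"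

lemma homog_iff_vanishes_outside: "homog d f \<longleftrightarrow> vanishes_outside (monoms d) f"
  by (auto simp: homog_def vanishes_outside_def monoms_def)

lemma sum_cscale_monomial3:
  assumes "finite E" "vanishes_outside E f"
  shows "(\<Sum>\<alpha>\<in>E. cscale (f \<alpha>) (monomial3 \<alpha>)) = f"
proof
  fix \<beta>
  have "(\<Sum>\<alpha>\<in>E. cscale (f \<alpha>) (monomial3 \<alpha>)) \<beta> = (\<Sum>\<alpha>\<in>E. if \<beta> = \<alpha> then f \<alpha> else 0)"
    by (simp add: sum_fun_apply cscale_def monomial3_def if_distrib cong: if_cong)
  then show "(\<Sum>\<alpha>\<in>E. cscale (f \<alpha>) (monomial3 \<alpha>)) \<beta> = f \<beta>"
    using assms(1) assms(2)[unfolded vanishes_outside_def, rule_format, of \<beta>] by auto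
qed

lemma mem_span_monomials:
  assumes "finite E" "vanishes_outside E f"
  shows "f \<in> cs.span (monomial3 ` E)"
  by (subst sum_cscale_monomial3[OF assms, symmetric])
    (intro cs.span_sum cs.span_scale cs.span_base imageI)

lemma forms_subset_span: "forms d \<subseteq> cs.span (monomial3 ` monoms d)"
  using mem_span_monomials[of "monoms d"] by (auto simp: forms_def homog_iff_vanishes_outside)

lemma inj_monomial3: "inj monomial3"
  by (rule injI) (metis monomial3_def zero_neq_one)

lemma independent_monomials: "finite E \<Longrightarrow> cs.independent (monomial3 ` E)"
proof
  assume "finite E" "cs.dependent (monomial3 ` E)"
  then obtain u \<alpha> where u: "(\<Sum>\<beta>\<in>E. cscale (u (monomial3 \<beta>)) (monomial3 \<beta>)) = 0"
    and \<alpha>: "\<alpha> \<in> E" "u (monomial3 \<alpha>) \<noteq> 0"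
    by (auto simp: cs.dependent_finite sum.reindex inj_on_subset[OF inj_monomial3])
  have "(\<Sum>\<beta>\<in>E. cscale (u (monomial3 \<beta>)) (monomial3 \<beta>)) \<alpha> = u (monomial3 \<alpha>)"
    using \<open>finite E\<close> \<alpha>(1) by (simp add: sum_fun_apply cscale_def monomial3_def if_distrib cong: if_cong)
  with u \<alpha>(2) show False by simp
qed

lemma dim_forms: "cs.dim (forms d) = card (monoms d)"
proof (rule cs.dim_unique[of "monomial3 ` monoms d"])
  show "monomial3 ` monoms d \<subseteq> forms d"
    by (auto simp: forms_def homog_def monomial3_def split: if_splits)
  show "card (monomial3 ` monoms d) = card (monoms d)"
    by (simp add: card_image inj_on_subset[OF inj_monomial3])
qed (simp_all add: forms_subset_span independent_monomials)

section \<open>Upper bound for the dimension of S_m\<close>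

lemma lex_add_less_add_left:
  fixes \<alpha> \<alpha>' \<beta> :: "nat \<times> nat \<times> nat"
  shows "\<alpha> < \<alpha>' \<Longrightarrow> \<beta> + \<alpha> < \<beta> + \<alpha>'"
  by (cases \<alpha>; cases \<alpha>'; cases \<beta>) (auto simp: less_prod_def)

(* Maximum in the lexicographic order on exponent triples (Product_Lexorder). *)
definition leading_monom :: "poly3 \<Rightarrow> nat \<times> nat \<times> nat" where
  "leading_monom F = Max {\<alpha>. F \<alpha> \<noteq> 0}"

lemma leading_monom:
  assumes "homog n F" "F \<noteq> (\<lambda>_. 0)"
  shows "leading_monom F \<in> monoms n" "F (leading_monom F) \<noteq> 0" "\<And>\<alpha>. F \<alpha> \<noteq> 0 \<Longrightarrow> \<alpha> \<le> leading_monom F"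
proof -
  have "{\<alpha>. F \<alpha> \<noteq> 0} \<subseteq> monoms n"
    using assms(1) by (auto simp: homog_def monoms_def)
  then have fin: "finite {\<alpha>. F \<alpha> \<noteq> 0}" by (rule finite_subset) simp
  moreover have "{\<alpha>. F \<alpha> \<noteq> 0} \<noteq> {}" using assms(2) by auto
  ultimately have "leading_monom F \<in> {\<alpha>. F \<alpha> \<noteq> 0}"
    unfolding leading_monom_def by (rule Max_in)
  with \<open>{\<alpha>. F \<alpha> \<noteq> 0} \<subseteq> monoms n\<close> show "leading_monom F \<in> monoms n" "F (leading_monom F) \<noteq> 0"
    by auto
  show "\<alpha> \<le> leading_monom F" if "F \<alpha> \<noteq> 0" for \<alpha>
    unfolding leading_monom_def using fin that by (intro Max_ge) auto
qed

lemma diffop_eq_zero_imp_eq_zero: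
  assumes lead: "F \<alpha>0 \<noteq> 0" "\<And>\<alpha>. F \<alpha> \<noteq> 0 \<Longrightarrow> \<alpha> \<le> \<alpha>0" "\<alpha>0 \<in> monoms n"
    and diffop: "diffop n F \<phi> = (\<lambda>_. 0)"
    and off: "\<And>\<gamma>. \<not> monom_dvd \<alpha>0 \<gamma> \<Longrightarrow> \<phi> \<gamma> = 0"
  shows "\<phi> = (\<lambda>_. 0)"
proof
  fix \<gamma>
  show "\<phi> \<gamma> = 0"
  \<comment> \<open>the coefficient of diffop at \<beta> is a combination of \<phi> (\<beta> + \<alpha>) over the support of F,
    where every \<beta> + \<alpha> except \<beta> + \<alpha>0 is lexicographically smaller\<close>
  proof (induction \<gamma> rule: less_induct)
    case (less \<gamma>)
    show ?case
    proof (cases "monom_dvd \<alpha>0 \<gamma>")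
      case True
      then obtain i j k where \<gamma>: "\<gamma> = (i, j, k) + \<alpha>0"
        unfolding monom_dvd_def by (metis prod.exhaust)
      let ?c = "\<lambda>(a, b, c). F (a, b, c) * (fact (i + a) / fact i) * (fact (j + b) / fact j)
          * (fact (k + c) / fact k) * \<phi> (i + a, j + b, k + c)"
      have "?c \<alpha> = 0" if "\<alpha> \<in> monoms n - {\<alpha>0}" for \<alpha>
      proof (cases "F \<alpha> = 0")
        case False
        then have "(i, j, k) + \<alpha> < \<gamma>"
          using lead(2) that \<gamma> by (simp add: lex_add_less_add_left order.not_eq_order_implies_strict)
        then have "\<phi> ((i, j, k) + \<alpha>) = 0" by (rule less)
        then show ?thesis by (cases \<alpha>) simp
      qed (cases \<alpha>; simp)
      then have "?c \<alpha>0 = diffop n F \<phi> (i, j, k)"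
        unfolding diffop_apply using lead(3) by (simp add: sum.remove sum.neutral)
      then have "?c \<alpha>0 = 0" using diffop by simp
      moreover have "(i + fst \<alpha>0, j + fst (snd \<alpha>0), k + snd (snd \<alpha>0)) = \<gamma>"
        using \<gamma> by (cases \<alpha>0) simp
      ultimately show ?thesis using lead(1) by (cases \<alpha>0) simp
    qed (rule off)
  qed
qed

lemma card_multiples_in_monoms:
  assumes "\<alpha> \<in> monoms n"
  shows "card {\<gamma> \<in> monoms m. monom_dvd \<alpha> \<gamma>} = (if n \<le> m then card (monoms (m - n)) else 0)"
proof (cases "n \<le> m")
  case True
  then have "{\<gamma> \<in> monoms m. monom_dvd \<alpha> \<gamma>} = (\<lambda>\<beta>. \<beta> + \<alpha>) ` monoms (m - n)"
    using monoms_multiples[OF assms, of "m - n"] by simp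
  with True show ?thesis by (simp add: card_image inj_on_def)
next
  case False
  then have "{\<gamma> \<in> monoms m. monom_dvd \<alpha> \<gamma>} = {}"
    using assms by (cases \<alpha>) (auto simp: monoms_def)
  with False show ?thesis by simp
qed

lemma S_space_eq_if_eq_off_multiples:
  assumes "homog n F" "F \<noteq> (\<lambda>_. 0)" "\<phi> \<in> S_space n F m" "\<psi> \<in> S_space n F m"
    and eq: "\<And>\<gamma>. \<gamma> \<in> monoms m \<Longrightarrow> \<not> monom_dvd (leading_monom F) \<gamma> \<Longrightarrow> \<phi> \<gamma> = \<psi> \<gamma>"
  shows "\<phi> = \<psi>"
proof -
  have "\<phi> - \<psi> \<in> S_space n F m" using assms(3,4) subspace_S_space cs.subspace_diff by blast
  have "\<phi> - \<psi> = (\<lambda>_. 0)"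
  proof (rule diffop_eq_zero_imp_eq_zero[of F "leading_monom F" n])
    show "F (leading_monom F) \<noteq> 0" "\<And>\<alpha>. F \<alpha> \<noteq> 0 \<Longrightarrow> \<alpha> \<le> leading_monom F"
      "leading_monom F \<in> monoms n"
      using leading_monom[OF assms(1,2)] by auto
    show "diffop n F (\<phi> - \<psi>) = (\<lambda>_. 0)" using \<open>\<phi> - \<psi> \<in> S_space n F m\<close> by (simp add: S_space_def)
    show "(\<phi> - \<psi>) \<gamma> = 0" if "\<not> monom_dvd (leading_monom F) \<gamma>" for \<gamma>
    proof (cases "\<gamma> \<in> monoms m")
      case True
      with that eq show ?thesis by simp
    next
      case False
      with \<open>\<phi> - \<psi> \<in> S_space n F m\<close> show ?thesis
        by (cases \<gamma>) (auto simp: S_space_def homog_def monoms_def)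
    qed
  qed
  then show ?thesis by (simp add: fun_eq_iff)
qed

lemma dim_S_space_le:
  assumes "homog n F" "F \<noteq> (\<lambda>_. 0)"
  shows "cs.dim (S_space n F m) \<le> card (monoms m) - (if n \<le> m then card (monoms (m - n)) else 0)"
proof -
  let ?\<alpha>0 = "leading_monom F" and ?S = "S_space n F m"
  define Fr where "Fr = {\<gamma> \<in> monoms m. \<not> monom_dvd ?\<alpha>0 \<gamma>}"
  define h where "h \<phi> = (\<lambda>\<gamma>. if \<gamma> \<in> Fr then \<phi> \<gamma> else 0)" for \<phi> :: poly3
  have inj: "inj_on h ?S"
  proof (rule inj_onI)
    fix \<phi> \<psi> assume "\<phi> \<in> ?S" "\<psi> \<in> ?S" "h \<phi> = h \<psi>"
    show "\<phi> = \<psi>"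
    proof (rule S_space_eq_if_eq_off_multiples[OF assms \<open>\<phi> \<in> ?S\<close> \<open>\<psi> \<in> ?S\<close>])
      fix \<gamma> assume "\<gamma> \<in> monoms m" "\<not> monom_dvd ?\<alpha>0 \<gamma>"
      then have "\<gamma> \<in> Fr" by (simp add: Fr_def)
      with fun_cong[OF \<open>h \<phi> = h \<psi>\<close>, of \<gamma>] show "\<phi> \<gamma> = \<psi> \<gamma>" by (simp add: h_def)
    qed
  qed
  have span: "h ` ?S \<subseteq> cs.span (monomial3 ` Fr)"
    by (auto simp: h_def Fr_def vanishes_outside_def intro!: mem_span_monomials)
  have "cs.dim ?S \<le> card (monomial3 ` Fr)"
    by (rule cs.dim_le_card_of_inj_on[OF subspace_S_space _ _ inj span])
      (auto simp: h_def Fr_def cscale_def fun_eq_iff)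
  also have "\<dots> = card (monoms m) - card {\<gamma> \<in> monoms m. monom_dvd ?\<alpha>0 \<gamma>}"
  proof -
    have "Fr = monoms m - {\<gamma> \<in> monoms m. monom_dvd ?\<alpha>0 \<gamma>}" by (auto simp: Fr_def)
    then show ?thesis by (simp add: card_image inj_on_subset[OF inj_monomial3] card_Diff_subset)
  qed
  finally show ?thesis
    using card_multiples_in_monoms[OF leading_monom(1)[OF assms]] by simp
qed

lemma r_num_eq_diff_choose:
  assumes "n \<ge> 2"
  shows "r_num n m = (m + 2 choose 2) - (if n \<le> m then m - n + 2 choose 2 else 0)"
proof (cases "n \<le> m")
  case True
  define k e where "k = n - 2" and "e = m - n"
  have n: "n = k + 2" and m: "m = e + k + 2" using assms True by (simp_all add: k_def e_def)
  define P Q R L where "P = (k + 1) * k" and "Q = (e + k + 4) * (e + k + 3)"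
    and "R = (e + 2) * (e + 1)" and "L = (e + k + 2) * (k + 2) + 1"
  have "Q + P = R + 2 * L" by (simp add: P_def Q_def R_def L_def algebra_simps)
  moreover have "even P" "even Q" "even R" by (auto simp: P_def Q_def R_def)
  ultimately have "Q div 2 + P div 2 = R div 2 + L" by (elim evenE) auto
  moreover have "R div 2 \<le> Q div 2" unfolding R_def Q_def by (intro div_le_mono mult_mono) auto
  ultimately have "L - P div 2 = Q div 2 - R div 2" by linarith
  moreover have "r_num n m = L - P div 2"
    using True by (simp add: r_num_def L_def P_def n m mult.commute)
  moreover have "m + 2 = e + k + 4" "m + 2 - 1 = e + k + 3" "m - n + 2 = e + 2" "m - n + 2 - 1 = e + 1"
    by (simp_all add: m n)
  ultimately show ?thesis
    using True by (simp only: choose_two Q_def R_def if_True)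
qed (simp add: r_num_def)

section \<open>Apolarity\<close>

definition apolar :: "nat \<Rightarrow> poly3 \<Rightarrow> poly3 \<Rightarrow> complex" where
  "apolar m g \<phi> = (\<Sum>(a, b, c)\<in>monoms m. fact a * fact b * fact c * g (a, b, c) * \<phi> (a, b, c))"

lemma apolar_add_left: "apolar m (f + g) \<phi> = apolar m f \<phi> + apolar m g \<phi>"
  unfolding apolar_def sum.distrib[symmetric] by (intro sum.cong) (auto simp: algebra_simps)

lemma apolar_cscale_left: "apolar m (cscale c g) \<phi> = c * apolar m g \<phi>"
  unfolding apolar_def sum_distrib_left by (intro sum.cong) (auto simp: algebra_simps cscale_def)

lemma apolar_eq_0_on_span:
  assumes "\<And>\<psi>. \<psi> \<in> T \<Longrightarrow> apolar m g \<psi> = 0" "\<phi> \<in> cs.span T"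
  shows "apolar m g \<phi> = 0"
  using assms(2)
proof (induction rule: cs.span_induct_alt)
  case (step c \<psi> \<phi>)
  have "apolar m g (cscale c \<psi> + \<phi>) = c * apolar m g \<psi> + apolar m g \<phi>"
    unfolding apolar_def sum_distrib_left sum.distrib[symmetric]
    by (intro sum.cong) (auto simp: algebra_simps cscale_def)
  with step assms(1) show ?case by (simp add: plus_fun_def)
qed (simp add: apolar_def)

lemma apolar_ppow_linform: "apolar m g (ppow (linform \<xi> \<eta> \<zeta>) m) = fact m * eval3 m g \<xi> \<eta> \<zeta>"
  unfolding apolar_def eval3_def sum_distrib_left
  by (intro sum.cong) (auto simp: ppow_linform multinomial3_def)

definition vanishing_forms :: "nat \<Rightarrow> poly3 \<Rightarrow> nat \<Rightarrow> poly3 set" where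
  "vanishing_forms n F m = {g. homog m g \<and>
     (\<forall>x y z. (x, y, z) \<noteq> (0, 0, 0) \<and> eval3 n F x y z = 0 \<longrightarrow> eval3 m g x y z = 0)}"

lemma card_monoms_le_dim_vanishing_forms_add:
  assumes "finite B"
    and powers: "\<And>\<xi> \<eta> \<zeta>. (\<xi>, \<eta>, \<zeta>) \<noteq> (0, 0, 0) \<Longrightarrow> eval3 n F \<xi> \<eta> \<zeta> = 0 \<Longrightarrow>
      ppow (linform \<xi> \<eta> \<zeta>) m \<in> cs.span B"
  shows "card (monoms m) \<le> cs.dim (vanishing_forms n F m) + card B"
proof -
  let ?K = "{g \<in> forms m. \<forall>\<psi>\<in>B. apolar m g \<psi> = 0}"
  have "card (monoms m) \<le> cs.dim ?K + card B"
    unfolding dim_forms[symmetric]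
    by (rule cs.dim_le_dim_kernels_add_card[OF subspace_forms forms_subset_span _ \<open>finite B\<close>])
      (simp_all add: apolar_add_left apolar_cscale_left)
  moreover have "?K \<subseteq> vanishing_forms n F m"
  proof safe
    fix g assume g: "g \<in> forms m" "\<forall>\<psi>\<in>B. apolar m g \<psi> = 0"
    have "eval3 m g x y z = 0" if "(x, y, z) \<noteq> (0, 0, 0)" "eval3 n F x y z = 0" for x y z
      using apolar_eq_0_on_span[of B m g, OF _ powers[OF that]] g(2) by (simp add: apolar_ppow_linform)
    with g(1) show "g \<in> vanishing_forms n F m" by (simp add: vanishing_forms_def forms_def)
  qed
  then have "cs.dim ?K \<le> cs.dim (vanishing_forms n F m)"
    by (rule cs.dim_le_dim_of_subset)
      (use forms_subset_span in \<open>auto simp: vanishing_forms_def forms_def\<close>)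
  ultimately show ?thesis by simp
qed

section \<open>Bivariate polynomials\<close>

(* Polynomials in t with coefficients in C[s]. *)
type_synonym bipoly = "complex poly poly"

definition poly2 :: "bipoly \<Rightarrow> complex \<Rightarrow> complex \<Rightarrow> complex" where
  "poly2 P s t = poly (poly P [:t:]) s"

lemma poly2_simps [simp]:
  "poly2 0 s t = 0"
  "poly2 (P + Q) s t = poly2 P s t + poly2 Q s t"
  "poly2 (P - Q) s t = poly2 P s t - poly2 Q s t"
  "poly2 (P * Q) s t = poly2 P s t * poly2 Q s t"
  "poly2 (P ^ k) s t = poly2 P s t ^ k"
  "poly2 (smult c P) s t = poly c s * poly2 P s t"
  by (simp_all add: poly2_def poly_power)

lemma poly2_sum [simp]: "poly2 (\<Sum>x\<in>A. f x) s t = (\<Sum>x\<in>A. poly2 (f x) s t)"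
  by (induction A rule: infinite_finite_induct) simp_all

definition specialize :: "complex \<Rightarrow> bipoly \<Rightarrow> complex poly" where
  "specialize s P = map_poly (\<lambda>c. poly c s) P"

lemma poly_specialize [simp]: "poly (specialize s P) t = poly2 P s t"
  unfolding specialize_def poly2_def by (induction P) (auto simp: map_poly_pCons)

lemma coeff_specialize: "coeff (specialize s P) k = poly (coeff P k) s"
  by (simp add: specialize_def coeff_map_poly)

lemma specialize_mult: "specialize s (P * Q) = specialize s P * specialize s Q"
  and specialize_power: "specialize s (P ^ k) = specialize s P ^ k"
  by (simp_all add: poly_eq_poly_eq_iff[symmetric] fun_eq_iff)

lemma specialize_pderiv: "specialize s (pderiv P) = pderiv (specialize s P)"
  by (rule poly_eqI) (simp add: coeff_specialize coeff_pderiv)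

lemma degree_specialize_le: "degree (specialize s P) \<le> degree P"
  unfolding specialize_def by (rule degree_map_poly_le)

lemma degree_specialize: "poly (lead_coeff P) s \<noteq> 0 \<Longrightarrow> degree (specialize s P) = degree P"
  by (metis coeff_specialize degree_specialize_le le_antisym le_degree)

lemma resultant_specialize:
  assumes "poly (lead_coeff P) s \<noteq> 0" "poly (lead_coeff Q) s \<noteq> 0"
  shows "resultant (specialize s P) (specialize s Q) = poly (resultant P Q) s"
  unfolding specialize_def using assms degree_specialize[unfolded specialize_def]
  by (intro comm_ring_hom.resultant_map_poly[OF poly_hom.comm_ring_hom_axioms]) simp_all

definition bicoeff :: "bipoly \<Rightarrow> nat \<Rightarrow> nat \<Rightarrow> complex" where
  "bicoeff P i k = coeff (coeff P k) i"

definition total_degree_le :: "nat \<Rightarrow> bipoly \<Rightarrow> bool" where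
  "total_degree_le d P \<longleftrightarrow> (\<forall>i k. bicoeff P i k \<noteq> 0 \<longrightarrow> i + k \<le> d)"

lemma bicoeff_mult:
  "bicoeff (P * Q) i k = (\<Sum>k1\<le>k. \<Sum>i1\<le>i. bicoeff P i1 k1 * bicoeff Q (i - i1) (k - k1))"
  unfolding bicoeff_def coeff_mult coeff_sum by simp

lemma total_degree_le_mult:
  assumes "total_degree_le d1 P" "total_degree_le d2 Q"
  shows "total_degree_le (d1 + d2) (P * Q)"
  unfolding total_degree_le_def
proof (intro allI impI)
  fix i k assume "bicoeff (P * Q) i k \<noteq> 0"
  then obtain k1 where k1: "k1 \<le> k" "(\<Sum>i1\<le>i. bicoeff P i1 k1 * bicoeff Q (i - i1) (k - k1)) \<noteq> 0"
    unfolding bicoeff_mult by (meson atMost_iff sum.not_neutral_contains_not_neutral)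
  then obtain i1 where "i1 \<le> i" "bicoeff P i1 k1 * bicoeff Q (i - i1) (k - k1) \<noteq> 0"
    by (meson atMost_iff sum.not_neutral_contains_not_neutral)
  then have "bicoeff P i1 k1 \<noteq> 0" "bicoeff Q (i - i1) (k - k1) \<noteq> 0" by auto
  then have "i1 + k1 \<le> d1" "(i - i1) + (k - k1) \<le> d2"
    using assms unfolding total_degree_le_def by blast+
  with k1(1) \<open>i1 \<le> i\<close> show "i + k \<le> d1 + d2" by linarith
qed

lemma total_degree_le_add: "total_degree_le d P \<Longrightarrow> total_degree_le d Q \<Longrightarrow> total_degree_le d (P + Q)"
  unfolding total_degree_le_def bicoeff_def by (metis add.right_neutral coeff_add)

lemma total_degree_le_sum:
  "(\<And>x. x \<in> A \<Longrightarrow> total_degree_le d (f x)) \<Longrightarrow> total_degree_le d (\<Sum>x\<in>A. f x)"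
proof (induction A rule: infinite_finite_induct)
  case (infinite A)
  then show ?case by (simp add: total_degree_le_def bicoeff_def)
next
  case empty
  then show ?case by (simp add: total_degree_le_def bicoeff_def)
qed (simp add: total_degree_le_add)

lemma total_degree_le_power: "total_degree_le d P \<Longrightarrow> total_degree_le (k * d) (P ^ k)"
proof (induction k)
  case 0
  then show ?case by (auto simp: total_degree_le_def bicoeff_def coeff_1)
next
  case (Suc k)
  then show ?case using total_degree_le_mult[of d P "k * d" "P ^ k"] by simp
qed

lemma total_degree_le_smult_const: "total_degree_le d P \<Longrightarrow> total_degree_le d (smult [:c:] P)"
  by (simp add: total_degree_le_def bicoeff_def)

lemma finite_bicoeff_support: "finite {(i, k). bicoeff P i k \<noteq> 0}"
proof -
  define N where "N = Max ((\<lambda>k. degree (coeff P k)) ` {..degree P})"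
  have "{(i, k). bicoeff P i k \<noteq> 0} \<subseteq> {..N} \<times> {..degree P}"
  proof clarify
    fix i k assume "bicoeff P i k \<noteq> 0"
    then have "i \<le> degree (coeff P k)" "k \<le> degree P"
      by (auto simp: bicoeff_def intro: le_degree)
    then show "i \<in> {..N} \<and> k \<in> {..degree P}"
      unfolding N_def by (auto intro: order.trans[OF _ Max_ge])
  qed
  then show ?thesis by (rule finite_subset) simp
qed

lemma bicoeff_mult_at_extremal:
  assumes P: "total_degree_le n P"
    and Q: "\<And>i k. bicoeff Q i k \<noteq> 0 \<Longrightarrow> i + k < i0 + K \<or> (i + k = i0 + K \<and> k \<le> K)"
  shows "bicoeff (P * Q) i0 (K + n) = bicoeff P 0 n * bicoeff Q i0 K"
proof -
  let ?f = "\<lambda>(k1, i1). bicoeff P i1 k1 * bicoeff Q (i0 - i1) (K + n - k1)"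
  have zero: "\<forall>x\<in>{..K + n} \<times> {..i0} - {(n, 0)}. ?f x = 0"
  proof
    fix x assume x: "x \<in> {..K + n} \<times> {..i0} - {(n, 0)}"
    obtain k1 i1 where x_eq: "x = (k1, i1)" by (cases x)
    show "?f x = 0"
    proof (rule ccontr)
      assume "?f x \<noteq> 0"
      then have "i1 + k1 \<le> n"
        and "(i0 - i1) + (K + n - k1) < i0 + K \<or> ((i0 - i1) + (K + n - k1) = i0 + K \<and> K + n - k1 \<le> K)"
        using P Q[of "i0 - i1" "K + n - k1"] unfolding total_degree_le_def x_eq by auto
      with x show False unfolding x_eq by auto
    qed
  qed
  have "(\<Sum>x\<in>{..K + n} \<times> {..i0}. ?f x) = ?f (n, 0)"
    by (subst sum.remove[of _ "(n, 0)"]) (simp_all add: sum.neutral[OF zero])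
  then show ?thesis by (simp add: bicoeff_mult sum.cartesian_product)
qed

lemma bicoeff_cofactor_le:
  assumes PQ: "total_degree_le m (P * Q)" and P: "total_degree_le n P" "bicoeff P 0 n \<noteq> 0"
    and "bicoeff Q i k \<noteq> 0"
  shows "i + k + n \<le> m"
proof -
  define S where "S = {(i, k). bicoeff Q i k \<noteq> 0}"
  let ?key = "\<lambda>(i, k). (i + k, k)"
  have "finite S" "S \<noteq> {}" using finite_bicoeff_support assms(4) by (auto simp: S_def)
  then have "Max (?key ` S) \<in> ?key ` S" by (intro Max_in) auto
  then obtain i0 K where top: "(i0, K) \<in> S" "?key (i0, K) = Max (?key ` S)" by auto
  have Q: "i' + k' < i0 + K \<or> (i' + k' = i0 + K \<and> k' \<le> K)" if "bicoeff Q i' k' \<noteq> 0" for i' k'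
  proof -
    have "?key (i', k') \<le> ?key (i0, K)"
      unfolding top(2) using \<open>finite S\<close> that by (intro Max_ge) (auto simp: S_def)
    then show ?thesis by (auto simp: less_eq_prod_def)
  qed
  have "bicoeff (P * Q) i0 (K + n) \<noteq> 0"
    using bicoeff_mult_at_extremal[OF P(1) Q] P(2) top(1) by (simp add: S_def)
  with PQ have "i0 + (K + n) \<le> m" by (auto simp: total_degree_le_def)
  with Q[OF assms(4)] show ?thesis by auto
qed

lemma eval3_scale: "eval3 d g (l * x) (l * y) (l * z) = l ^ d * eval3 d g x y z"
  unfolding eval3_def sum_distrib_left
  by (intro sum.cong) (auto simp: power_mult_distrib power_add[symmetric] algebra_simps)

lemma eval3_add: "eval3 d (f + g) x y z = eval3 d f x y z + eval3 d g x y z"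
  unfolding eval3_def sum.distrib[symmetric] by (intro sum.cong) (auto simp: algebra_simps)

lemma eval3_cscale: "eval3 d (cscale c f) x y z = c * eval3 d f x y z"
  unfolding eval3_def sum_distrib_left by (intro sum.cong) (auto simp: algebra_simps cscale_def)

lemma subspace_vanishing_forms: "cs.subspace (vanishing_forms n F m)"
  unfolding cs.subspace_def vanishing_forms_def
  by (auto simp: homog_add homog_cscale eval3_add eval3_cscale) (simp_all add: homog_def eval3_def)

lemma isCont_eval3_x: "isCont (\<lambda>x. eval3 d g x y z) x0"
  and isCont_eval3_z: "isCont (\<lambda>z. eval3 d g x y z) z0"
  unfolding eval3_def case_prod_unfold by (intro continuous_intros)+

lemma isCont_eq_0_if_eq_0_nearby:
  fixes f :: "complex \<Rightarrow> complex"
  assumes "isCont f c" "\<And>x. x \<noteq> c \<Longrightarrow> f x = 0"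
  shows "f c = 0"
proof -
  have "(f \<longlongrightarrow> 0) (at c)"
    by (rule tendsto_eventually) (auto simp: eventually_at_filter assms(2))
  with assms(1) show ?thesis by (simp add: isCont_def tendsto_unique[OF at_neq_bot])
qed

lemma eval3_eq_0_imp_eq_0:
  assumes "homog d g" "\<And>x y z. eval3 d g x y z = 0"
  shows "g = (\<lambda>_. 0)"
proof
  fix t :: "nat \<times> nat \<times> nat"
  obtain i0 j0 k0 where t: "t = (i0, j0, k0)" by (cases t)
  show "g t = 0"
  proof (cases "i0 + j0 + k0 = d")
    case False
    with assms(1) show ?thesis by (auto simp: homog_def t)
  next
    case True
    define q where "q = (\<Sum>(i, j, k)\<in>monoms d. smult (if i = i0 then g (i, j, k) else 0) (monom 1 j))"
    have "poly q y = 0" for y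
    proof -
      define p where "p = (\<Sum>(i, j, k)\<in>monoms d. smult (g (i, j, k) * y ^ j) (monom 1 i))"
      have "poly p x = eval3 d g x y 1" for x
        unfolding p_def eval3_def poly_sum by (intro sum.cong) (auto simp: poly_monom)
      then have "p = 0" using assms(2) poly_all_0_iff_0 by metis
      moreover have "poly q y = coeff p i0"
        unfolding p_def q_def poly_sum coeff_sum by (intro sum.cong) (auto simp: poly_monom coeff_monom)
      ultimately show ?thesis by simp
    qed
    then have "coeff q j0 = 0" using poly_all_0_iff_0 by (metis coeff_0)
    moreover have "coeff q j0 = (\<Sum>\<alpha>\<in>monoms d. if \<alpha> = t then g \<alpha> else 0)"
      unfolding q_def coeff_sum using True by (intro sum.cong) (auto simp: coeff_monom t split: if_splits)
    ultimately show ?thesis using True by (simp add: t)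
  qed
qed

lemma exists_eval3_ne_0_on_chart:
  assumes "homog n F" "F \<noteq> (\<lambda>_. 0)"
  obtains a b where "eval3 n F a b 1 \<noteq> 0"
proof -
  have "\<exists>a b. eval3 n F a b 1 \<noteq> 0"
  proof (rule ccontr)
    assume "\<not> (\<exists>a b. eval3 n F a b 1 \<noteq> 0)"
    then have off_line: "eval3 n F x y z = 0" if "z \<noteq> 0" for x y z
      using eval3_scale[of n F z "x / z" "y / z" 1] that by simp
    have "eval3 n F x y z = 0" for x y z
    proof (cases "z = 0")
      case True
      have "eval3 n F x y 0 = 0"
        by (rule isCont_eq_0_if_eq_0_nearby[OF isCont_eval3_z off_line])
      with True show ?thesis by simp
    qed (rule off_line)
    with assms show False using eval3_eq_0_imp_eq_0 by blast
  qed
  with that show ?thesis by blast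
qed

lemma coeff_mult_at_degree_bounds:
  fixes p q :: "'a::comm_semiring_0 poly"
  assumes "degree p \<le> i" "degree q \<le> j"
  shows "coeff (p * q) (i + j) = coeff p i * coeff q j"
proof (cases "degree p = i \<and> degree q = j")
  case True
  then show ?thesis by (metis coeff_mult_degree_sum)
next
  case False
  with assms have "degree (p * q) < i + j" "coeff p i = 0 \<or> coeff q j = 0"
    using degree_mult_le[of p q] by (auto intro!: coeff_eq_0)
  then show ?thesis by (auto simp: coeff_eq_0)
qed

lemma coeff_power_at_degree_bound:
  fixes p :: "'a::comm_semiring_1 poly"
  assumes "degree p \<le> 1"
  shows "degree (p ^ e) \<le> e \<and> coeff (p ^ e) e = coeff p 1 ^ e"
proof (induction e)
  case (Suc e)
  with assms have "degree (p ^ Suc e) \<le> 1 + e"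
    using degree_mult_le[of p "p ^ e"] by (simp del: power_Suc add: power_Suc)
  moreover have "coeff (p * p ^ e) (1 + e) = coeff p 1 * coeff (p ^ e) e"
    using Suc assms by (intro coeff_mult_at_degree_bounds) auto
  ultimately show ?case using Suc by simp
qed simp

(* g on the plane x = 1 + a t, y = s + b t, z = t. *)
definition chart :: "complex \<Rightarrow> complex \<Rightarrow> nat \<Rightarrow> poly3 \<Rightarrow> bipoly" where
  "chart a b d g = (\<Sum>(i, j, k)\<in>monoms d.
     smult [:g (i, j, k):] ([:[:1:], [:a:]:] ^ i * [:[:0, 1:], [:b:]:] ^ j * [:0, 1:] ^ k))"

lemma poly2_chart: "poly2 (chart a b d g) s t = eval3 d g (1 + a * t) (s + b * t) t"
  unfolding chart_def eval3_def poly2_sum by (intro sum.cong) (auto simp: poly2_def algebra_simps)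

lemma chart_add: "chart a b d (f + g) = chart a b d f + chart a b d g"
  unfolding chart_def sum.distrib[symmetric] by (intro sum.cong) (auto simp: smult_add_left)

lemma chart_cscale: "chart a b d (cscale c f) = smult [:c:] (chart a b d f)"
  unfolding chart_def smult_sum2 by (intro sum.cong) (auto simp: cscale_def mult.commute)

lemma chart_diff: "chart a b d (f - g) = chart a b d f - chart a b d g"
  unfolding chart_def sum_subtractf[symmetric] by (intro sum.cong) (auto simp: smult_diff_left)

lemma total_degree_le_chart: "total_degree_le d (chart a b d g)"
  unfolding chart_def
proof (intro total_degree_le_sum, clarify)
  fix i j k assume "(i, j, k) \<in> monoms d"
  then have d: "d = i * 1 + j * 1 + k * 1" by simp
  have "total_degree_le 1 [:[:1:], [:a:]:]" "total_degree_le 1 [:[:0, 1:], [:b:]:]" "total_degree_le 1 [:0, 1:]"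
    by (auto simp: total_degree_le_def bicoeff_def coeff_pCons split: nat.splits)
  then show "total_degree_le d (smult [:g (i, j, k):] ([:[:1:], [:a:]:] ^ i * [:[:0, 1:], [:b:]:] ^ j * [:0, 1:] ^ k))"
    unfolding d by (intro total_degree_le_smult_const total_degree_le_mult total_degree_le_power)
qed

lemma chart_top:
  "degree (chart a b d g) \<le> d" "coeff (chart a b d g) d = [:eval3 d g a b 1:]"
proof -
  let ?X = "[:[:1:], [:a:]:]" and ?Y = "[:[:0, 1:], [:b:]:]" and ?Z = "[:0, 1:] :: bipoly"
  have summand: "degree (?X ^ i * ?Y ^ j * ?Z ^ k) \<le> d \<and> coeff (?X ^ i * ?Y ^ j * ?Z ^ k) d = [:a ^ i * b ^ j:]"
    if "i + j + k = d" for i j k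
  proof -
    have X: "degree (?X ^ i) \<le> i" "coeff (?X ^ i) i = [:a:] ^ i"
      using coeff_power_at_degree_bound[of ?X i] by simp_all
    have Y: "degree (?Y ^ j) \<le> j" "coeff (?Y ^ j) j = [:b:] ^ j"
      using coeff_power_at_degree_bound[of ?Y j] by simp_all
    have Z: "degree (?Z ^ k) \<le> k" "coeff (?Z ^ k) k = 1"
      using coeff_power_at_degree_bound[of ?Z k] by simp_all
    have XY: "degree (?X ^ i * ?Y ^ j) \<le> i + j"
      by (rule order.trans[OF degree_mult_le add_mono[OF X(1) Y(1)]])
    have "degree (?X ^ i * ?Y ^ j * ?Z ^ k) \<le> i + j + k"
      by (rule order.trans[OF degree_mult_le add_mono[OF XY Z(1)]])
    moreover have "coeff (?X ^ i * ?Y ^ j * ?Z ^ k) (i + j + k) = [:a:] ^ i * [:b:] ^ j"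
      by (simp only: coeff_mult_at_degree_bounds[OF XY Z(1)] coeff_mult_at_degree_bounds[OF X(1) Y(1)] X(2) Y(2) Z(2) mult_1_right)
    ultimately show ?thesis using that by (simp add: poly_const_pow)
  qed
  show "degree (chart a b d g) \<le> d"
    unfolding chart_def using summand
    by (intro degree_sum_le) (auto intro: order.trans[OF degree_smult_le])
  have "coeff (chart a b d g) d = (\<Sum>(i, j, k)\<in>monoms d. [:g (i, j, k) * a ^ i * b ^ j:])"
    unfolding chart_def coeff_sum
  proof (intro sum.cong refl, clarify)
    fix i j k assume "(i, j, k) \<in> monoms d"
    then show "coeff (smult [:g (i, j, k):] (?X ^ i * ?Y ^ j * ?Z ^ k)) d = [:g (i, j, k) * a ^ i * b ^ j:]"
      using summand[of i j k] by simp
  qed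
  also have "\<dots> = [:eval3 d g a b 1:]"
    unfolding eval3_def by (simp add: case_prod_unfold sum_to_poly)
  finally show "coeff (chart a b d g) d = [:eval3 d g a b 1:]" .
qed

lemma chart_coordinates:
  fixes x y z a b :: complex
  assumes "x \<noteq> a * z"
  obtains l t s where "l \<noteq> 0" "x = l * (1 + a * t)" "y = l * (s + b * t)" "z = l * t"
proof -
  obtain l where x: "x = l + a * z" by (metis diff_add_cancel)
  with assms have "l \<noteq> 0" by auto
  have "x = l * (1 + a * (z / l))" using x \<open>l \<noteq> 0\<close> by (simp add: field_simps)
  with \<open>l \<noteq> 0\<close> show ?thesis by (intro that[of l "z / l" "y / l - b * (z / l)"]) simp_all
qed

lemma chart_eq_0_imp_eq_0:
  assumes "homog d g" "chart a b d g = 0"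
  shows "g = (\<lambda>_. 0)"
proof (rule eval3_eq_0_imp_eq_0[OF assms(1)])
  have off_line: "eval3 d g x y z = 0" if xz: "x \<noteq> a * z" for x y z
  proof -
    obtain l t s where "l \<noteq> 0" "x = l * (1 + a * t)" "y = l * (s + b * t)" "z = l * t"
      using chart_coordinates[OF xz] .
    then have "eval3 d g x y z = l ^ d * poly2 (chart a b d g) s t"
      by (simp add: eval3_scale poly2_chart)
    with assms(2) show ?thesis by simp
  qed
  fix x y z
  show "eval3 d g x y z = 0"
  proof (cases "x = a * z")
    case True
    have "eval3 d g (a * z) y z = 0"
      by (rule isCont_eq_0_if_eq_0_nearby[OF isCont_eval3_x off_line])
    with True show ?thesis by simp
  qed (rule off_line)
qed

lemma eval3_pdx:
  assumes "homog d g"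
  shows "eval3 (d - 1) (pdx g) x y z = (\<Sum>(i, j, k)\<in>monoms d. g (i, j, k) * of_nat i * x ^ (i - 1) * y ^ j * z ^ k)"
proof (cases d)
  case 0
  then have "g (1, 0, 0) = 0" using assms unfolding homog_def by force
  with 0 show ?thesis by (simp add: eval3_def pdx_def monoms_def)
next
  case (Suc e)
  have "eval3 (d - 1) (pdx g) x y z =
      (\<Sum>\<beta>\<in>monoms e. (\<lambda>(i, j, k). g (i, j, k) * of_nat i * x ^ (i - 1) * y ^ j * z ^ k) (\<beta> + (1, 0, 0)))"
    unfolding eval3_def Suc by (intro sum.cong) (auto simp: pdx_def)
  also have "\<dots> = (\<Sum>(i, j, k)\<in>monoms d. g (i, j, k) * of_nat i * x ^ (i - 1) * y ^ j * z ^ k)"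
    unfolding Suc by (subst sum_monoms_shift[of _ 1, simplified]) auto
  finally show ?thesis .
qed

lemma eval3_pdy:
  assumes "homog d g"
  shows "eval3 (d - 1) (pdy g) x y z = (\<Sum>(i, j, k)\<in>monoms d. g (i, j, k) * of_nat j * x ^ i * y ^ (j - 1) * z ^ k)"
proof (cases d)
  case 0
  then have "g (0, 1, 0) = 0" using assms unfolding homog_def by force
  with 0 show ?thesis by (simp add: eval3_def pdy_def monoms_def)
next
  case (Suc e)
  have "eval3 (d - 1) (pdy g) x y z =
      (\<Sum>\<beta>\<in>monoms e. (\<lambda>(i, j, k). g (i, j, k) * of_nat j * x ^ i * y ^ (j - 1) * z ^ k) (\<beta> + (0, 1, 0)))"
    unfolding eval3_def Suc by (intro sum.cong) (auto simp: pdy_def)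
  also have "\<dots> = (\<Sum>(i, j, k)\<in>monoms d. g (i, j, k) * of_nat j * x ^ i * y ^ (j - 1) * z ^ k)"
    unfolding Suc by (subst sum_monoms_shift[of _ 1, simplified]) auto
  finally show ?thesis .
qed

lemma eval3_pdz:
  assumes "homog d g"
  shows "eval3 (d - 1) (pdz g) x y z = (\<Sum>(i, j, k)\<in>monoms d. g (i, j, k) * of_nat k * x ^ i * y ^ j * z ^ (k - 1))"
proof (cases d)
  case 0
  then have "g (0, 0, 1) = 0" using assms unfolding homog_def by force
  with 0 show ?thesis by (simp add: eval3_def pdz_def monoms_def)
next
  case (Suc e)
  have "eval3 (d - 1) (pdz g) x y z =
      (\<Sum>\<beta>\<in>monoms e. (\<lambda>(i, j, k). g (i, j, k) * of_nat k * x ^ i * y ^ j * z ^ (k - 1)) (\<beta> + (0, 0, 1)))"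
    unfolding eval3_def Suc by (intro sum.cong) (auto simp: pdz_def)
  also have "\<dots> = (\<Sum>(i, j, k)\<in>monoms d. g (i, j, k) * of_nat k * x ^ i * y ^ j * z ^ (k - 1))"
    unfolding Suc by (subst sum_monoms_shift[of _ 1, simplified]) auto
  finally show ?thesis .
qed

definition grad_dot :: "nat \<Rightarrow> poly3 \<Rightarrow> complex \<Rightarrow> complex \<Rightarrow> complex \<Rightarrow>
    complex \<Rightarrow> complex \<Rightarrow> complex \<Rightarrow> complex" where
  "grad_dot d g x y z u v w = u * eval3 (d - 1) (pdx g) x y z + v * eval3 (d - 1) (pdy g) x y z
     + w * eval3 (d - 1) (pdz g) x y z"

lemma grad_dot_eq_sum:
  assumes "homog d g"
  shows "grad_dot d g x y z u v w = (\<Sum>(i, j, k)\<in>monoms d. g (i, j, k) *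
    (u * of_nat i * x ^ (i - 1) * y ^ j * z ^ k + v * of_nat j * x ^ i * y ^ (j - 1) * z ^ k
      + w * of_nat k * x ^ i * y ^ j * z ^ (k - 1)))"
  unfolding grad_dot_def eval3_pdx[OF assms] eval3_pdy[OF assms] eval3_pdz[OF assms]
    sum_distrib_left sum.distrib[symmetric]
  by (intro sum.cong) (auto simp: algebra_simps)

lemma mult_of_nat_power_pred: "x * (of_nat i * x ^ (i - 1)) = of_nat i * x ^ i"
  for x :: "'a::comm_semiring_1"
  by (cases i) (simp_all add: mult.left_commute)

lemma euler_identity:
  assumes "homog d g"
  shows "grad_dot d g x y z x y z = of_nat d * eval3 d g x y z"
proof -
  have "x * of_nat i * x ^ (i - 1) * y ^ j * z ^ k + y * of_nat j * x ^ i * y ^ (j - 1) * z ^ k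
      + z * of_nat k * x ^ i * y ^ j * z ^ (k - 1) = of_nat (i + j + k) * x ^ i * y ^ j * z ^ k" for i j k
  proof -
    have "x * of_nat i * x ^ (i - 1) * y ^ j * z ^ k + y * of_nat j * x ^ i * y ^ (j - 1) * z ^ k
        + z * of_nat k * x ^ i * y ^ j * z ^ (k - 1) = (x * (of_nat i * x ^ (i - 1))) * y ^ j * z ^ k
        + x ^ i * (y * (of_nat j * y ^ (j - 1))) * z ^ k + x ^ i * y ^ j * (z * (of_nat k * z ^ (k - 1)))"
      by (simp add: algebra_simps)
    then show ?thesis by (simp only: mult_of_nat_power_pred) (simp add: algebra_simps)
  qed
  then have "grad_dot d g x y z x y z = (\<Sum>(i, j, k)\<in>monoms d. g (i, j, k) * of_nat (i + j + k) * x ^ i * y ^ j * z ^ k)"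
    unfolding grad_dot_eq_sum[OF assms] by (intro sum.cong) (auto simp: mult.assoc)
  also have "\<dots> = of_nat d * eval3 d g x y z"
    unfolding eval3_def sum_distrib_left by (intro sum.cong) (auto simp: algebra_simps)
  finally show ?thesis .
qed

lemma has_field_derivative_eval3_line:
  assumes "homog d g"
  shows "((\<lambda>t. eval3 d g (x + t * u) (y + t * v) (z + t * w)) has_field_derivative
    grad_dot d g (x + t * u) (y + t * v) (z + t * w) u v w) (at t)"
  unfolding grad_dot_eq_sum[OF assms] eval3_def case_prod_unfold
  by (auto intro!: derivative_eq_intros sum.cong simp: algebra_simps)

lemma pderiv_eval3_line:
  assumes "homog d g" "\<And>t. poly p t = eval3 d g (x + t * u) (y + t * v) (z + t * w)"
  shows "poly (pderiv p) t = grad_dot d g (x + t * u) (y + t * v) (z + t * w) u v w"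
proof -
  have "poly p = (\<lambda>t. eval3 d g (x + t * u) (y + t * v) (z + t * w))" using assms(2) by auto
  with poly_DERIV[of p t] have "((\<lambda>t. eval3 d g (x + t * u) (y + t * v) (z + t * w)) has_field_derivative
      poly (pderiv p) t) (at t)" by simp
  from DERIV_unique[OF this has_field_derivative_eval3_line[OF assms(1)]] show ?thesis .
qed

section \<open>Forms vanishing on a smooth curve\<close>

lemma degree_prod_mset: "0 \<notin># A \<Longrightarrow> degree (prod_mset A) = (\<Sum>p\<in>#A. degree p)"
  for A :: "'a::idom poly multiset"
  by (induction A) (auto simp: degree_mult_eq prod_mset_zero_iff)

lemma prime_factor_of_positive_degree:
  fixes p :: bipoly
  assumes "degree p > 0"
  obtains q where "prime q" "q dvd p" "degree q > 0"
proof -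
  let ?A = "prime_factorization p"
  have "p \<noteq> 0" using assms by auto
  have "0 \<notin># ?A" using in_prime_factors_imp_prime by fastforce
  have "degree (prod_mset ?A) = degree p"
    using prod_mset_prime_factorization_weak[OF \<open>p \<noteq> 0\<close>] by (metis degree_normalize)
  with assms \<open>0 \<notin># ?A\<close> have "sum_mset (image_mset degree ?A) \<noteq> 0"
    by (simp add: degree_prod_mset)
  then obtain q where "q \<in># ?A" "degree q > 0"
    unfolding sum_mset_0_iff by auto
  with that show ?thesis by (blast intro: in_prime_factors_imp_prime in_prime_factors_imp_dvd)
qed

lemma square_factor_if_resultant_pderiv_eq_0:
  fixes p :: bipoly
  assumes "p \<noteq> 0" "resultant p (pderiv p) = 0"
  obtains q h where "degree q > 0" "p = q ^ 2 * h"
proof -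
  have "degree (gcd p (pderiv p)) > 0" using assms(2) resultant_0_gcd by blast
  then obtain q where q: "prime q" "q dvd gcd p (pderiv p)" "degree q > 0"
    by (rule prime_factor_of_positive_degree)
  then obtain h1 where h1: "p = q * h1" by (meson dvd_gcdD1 dvdE)
  have "q dvd pderiv p" using q(2) by (meson dvd_gcdD2)
  moreover have "pderiv p = q * pderiv h1 + h1 * pderiv q" by (simp add: h1 pderiv_mult)
  ultimately have "q dvd h1 * pderiv q" by (metis dvd_add_right_iff dvd_triv_left)
  moreover have "\<not> q dvd pderiv q" using q(3) by simp
  ultimately have "q dvd h1" using q(1) prime_dvd_mult_iff by blast
  then obtain h where "h1 = q * h" by (elim dvdE)
  with h1 q(3) show ?thesis by (intro that[of q h]) (simp_all add: power2_eq_square)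
qed

lemma bipoly_has_zero:
  assumes "degree q > 0"
  obtains s t where "poly2 q s t = 0"
proof -
  have "lead_coeff q \<noteq> 0" using assms by auto
  then obtain s where s: "poly (lead_coeff q) s \<noteq> 0" using poly_all_0_iff_0 by blast
  then have "degree (specialize s q) > 0" using assms by (simp add: degree_specialize)
  then obtain t where "poly (specialize s q) t = 0"
    using fundamental_theorem_of_algebra constant_degree by (metis not_gr0)
  with that show ?thesis by simp
qed

lemma pderiv_square_mult_at_root:
  fixes p h :: "'a::idom poly"
  shows "poly p x = 0 \<Longrightarrow> poly (pderiv (p ^ 2 * h)) x = 0"
  by (simp add: pderiv_mult pderiv_power_Suc numeral_2_eq_2)

lemma chart_square_factor_critical_point:
  assumes "homog d g" "chart a b d g = q ^ 2 * h" "poly2 q s t = 0"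
  shows "eval3 d g (1 + a * t) (s + b * t) t = 0"
    and "grad_dot d g (1 + a * t) (s + b * t) t a b 1 = 0"
    and "grad_dot d g (1 + a * t) (s + b * t) t 0 1 0 = 0"
proof -
  show "eval3 d g (1 + a * t) (s + b * t) t = 0"
    using poly2_chart[of a b d g s t] assms(3) by (simp add: assms(2))
  have "poly (specialize s (chart a b d g)) t' = eval3 d g (1 + t' * a) (s + t' * b) (0 + t' * 1)" for t'
    by (simp add: poly2_chart algebra_simps)
  then have "poly (pderiv (specialize s (chart a b d g))) t
      = grad_dot d g (1 + t * a) (s + t * b) (0 + t * 1) a b 1"
    by (rule pderiv_eval3_line[OF assms(1)])
  moreover have "specialize s (chart a b d g) = specialize s q ^ 2 * specialize s h"
    by (simp add: assms(2) specialize_mult specialize_power)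
  ultimately show "grad_dot d g (1 + a * t) (s + b * t) t a b 1 = 0"
    using pderiv_square_mult_at_root[of "specialize s q" t] assms(3) by (simp add: mult.commute)
  have "poly (poly (chart a b d g) [:t:]) s' = eval3 d g ((1 + a * t) + s' * 0) (b * t + s' * 1) (t + s' * 0)" for s'
    using poly2_chart[of a b d g s' t] by (simp add: poly2_def algebra_simps)
  then have "poly (pderiv (poly (chart a b d g) [:t:])) s
      = grad_dot d g ((1 + a * t) + s * 0) (b * t + s * 1) (t + s * 0) 0 1 0"
    by (rule pderiv_eval3_line[OF assms(1)])
  moreover have "poly (chart a b d g) [:t:] = poly q [:t:] ^ 2 * poly h [:t:]"
    by (simp add: assms(2) poly_power)
  moreover have "poly (poly q [:t:]) s = 0" using assms(3) by (simp add: poly2_def)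
  ultimately show "grad_dot d g (1 + a * t) (s + b * t) t 0 1 0 = 0"
    using pderiv_square_mult_at_root[of "poly q [:t:]" s] by (simp add: add.commute)
qed

lemma dvd_if_vanishes_on_simple_roots:
  fixes f r :: "complex poly"
  assumes "f \<noteq> 0" "\<And>x. poly f x = 0 \<Longrightarrow> poly (pderiv f) x \<noteq> 0" "\<And>x. poly f x = 0 \<Longrightarrow> poly r x = 0"
  shows "f dvd r"
  using assms
proof (induction "degree f" arbitrary: f r rule: less_induct)
  case less
  show ?case
  proof (cases "degree f = 0")
    case True
    with less.prems(1) show ?thesis by (metis is_unit_iff_degree unit_imp_dvd)
  next
    case False
    then obtain x0 where x0: "poly f x0 = 0"
      by (metis constant_degree fundamental_theorem_of_algebra)
    then obtain g where g: "f = [:-x0, 1:] * g" using poly_eq_0_iff_dvd by blast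
    have "pderiv [:-x0, 1:] = 1" by (simp add: pderiv_pCons)
    then have pd: "pderiv f = g + [:-x0, 1:] * pderiv g"
      by (simp only: g pderiv_mult mult_1_right add.commute)
    then have "poly g x0 \<noteq> 0" using less.prems(2)[OF x0] by simp
    obtain r' where r': "r = [:-x0, 1:] * r'"
      using less.prems(3) x0 poly_eq_0_iff_dvd by blast
    have "g \<noteq> 0" using less.prems(1) g by auto
    then have "degree g < degree f" unfolding g by (subst degree_mult_eq) auto
    moreover have "poly (pderiv g) x \<noteq> 0" if "poly g x = 0" for x
      using less.prems(2)[of x] that pd by (simp add: g)
    moreover have "poly r' x = 0" if "poly g x = 0" for x
      using less.prems(3)[of x] that \<open>poly g x0 \<noteq> 0\<close> by (auto simp: g r')
    ultimately have "g dvd r'" by (intro less.hyps) auto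
    then show ?thesis unfolding g r' by (rule mult_dvd_mono[OF dvd_refl])
  qed
qed

lemma no_common_root_if_resultant_ne_0:
  fixes f g :: "complex poly"
  assumes "f \<noteq> 0" "resultant f g \<noteq> 0" "poly f x = 0"
  shows "poly g x \<noteq> 0"
proof
  assume "poly g x = 0"
  with assms(3) have "[:-x, 1:] dvd gcd f g" by (simp add: poly_eq_0_iff_dvd)
  then have "degree [:-x, 1:] \<le> degree (gcd f g)"
    using assms(1) by (intro dvd_imp_degree_le) auto
  with assms(2) show False by (simp add: resultant_0_gcd)
qed

(* The point [a : b : 1] is off the curve, so the chart of F has degree n in t with
   constant leading coefficient. *)
context
  fixes n :: nat and F :: poly3 and a b :: complex
  assumes n: "n \<ge> 2" and smooth: "smooth_curve_poly n F" and chart_nonzero: "eval3 n F a b 1 \<noteq> 0"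
begin

lemma homog_curve: "homog n F"
  using smooth by (simp add: smooth_curve_poly_def)

lemma degree_chart_curve: "degree (chart a b n F) = n"
  and lead_coeff_chart_curve: "lead_coeff (chart a b n F) = [:eval3 n F a b 1:]"
proof -
  have "coeff (chart a b n F) n \<noteq> 0" using chart_top(2) chart_nonzero by simp
  then show "degree (chart a b n F) = n" using chart_top(1) le_degree le_antisym by blast
  with chart_top(2) show "lead_coeff (chart a b n F) = [:eval3 n F a b 1:]" by simp
qed

lemma chart_curve_no_square_factor:
  assumes "chart a b n F = q ^ 2 * h" "degree q > 0"
  shows False
proof -
  obtain s t where "poly2 q s t = 0" using bipoly_has_zero[OF assms(2)] .
  define X Y where "X = 1 + a * t" and "Y = s + b * t"
  let ?Fx = "eval3 (n - 1) (pdx F) X Y t" and ?Fy = "eval3 (n - 1) (pdy F) X Y t"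
    and ?Fz = "eval3 (n - 1) (pdz F) X Y t"
  note critical = chart_square_factor_critical_point[OF homog_curve assms(1) \<open>poly2 q s t = 0\<close>,
      folded X_def Y_def, unfolded grad_dot_def]
  \<comment> \<open>(X, Y, t) = (1, 0, 0) + t (a, b, 1) + s (0, 1, 0), so Euler's identity yields ?Fx = 0.\<close>
  have "X * ?Fx + Y * ?Fy + t * ?Fz = 0"
    using euler_identity[OF homog_curve, of X Y t] critical(1) by (simp add: grad_dot_def)
  then have "?Fx + t * (a * ?Fx + b * ?Fy + ?Fz) + s * ?Fy = 0"
    by (simp add: X_def Y_def algebra_simps)
  with critical(2,3) have "?Fx = 0" by simp
  with critical(2,3) have "?Fz = 0" by simp
  moreover have "(X, Y, t) \<noteq> (0, 0, 0)" by (auto simp: X_def)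
  ultimately show False
    using smooth critical(1,3) \<open>?Fx = 0\<close> unfolding smooth_curve_poly_def by auto
qed

lemma resultant_chart_curve_ne_0: "resultant (chart a b n F) (pderiv (chart a b n F)) \<noteq> 0"
proof
  assume "resultant (chart a b n F) (pderiv (chart a b n F)) = 0"
  moreover have "chart a b n F \<noteq> 0" using degree_chart_curve n by auto
  ultimately show False
    using square_factor_if_resultant_pderiv_eq_0 chart_curve_no_square_factor by metis
qed

lemma chart_curve_remainder_eq_0:
  assumes "degree r < n" and vanish: "\<And>s t. poly2 (chart a b n F) s t = 0 \<Longrightarrow> poly2 r s t = 0"
  shows "r = 0"
proof -
  let ?\<Phi> = "chart a b n F" and ?D = "resultant (chart a b n F) (pderiv (chart a b n F))"
  have "specialize s r = 0" if "poly ?D s \<noteq> 0" for s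
  proof -
    let ?f = "specialize s ?\<Phi>"
    have lead: "poly (lead_coeff ?\<Phi>) s \<noteq> 0" "poly (lead_coeff (pderiv ?\<Phi>)) s \<noteq> 0"
      using chart_nonzero n by (simp_all add: chart_top(2) degree_chart_curve
          coeff_pderiv degree_pderiv of_nat_poly)
    then have "degree ?f = n" by (simp add: degree_specialize degree_chart_curve)
    then have "?f \<noteq> 0" using n by auto
    have "resultant ?f (pderiv ?f) = poly ?D s"
      using resultant_specialize[OF lead] by (simp add: specialize_pderiv)
    then have "poly (pderiv ?f) x \<noteq> 0" if "poly ?f x = 0" for x
      using no_common_root_if_resultant_ne_0 \<open>?f \<noteq> 0\<close> \<open>poly ?D s \<noteq> 0\<close> that by metis
    then have "?f dvd specialize s r"
      using dvd_if_vanishes_on_simple_roots[OF \<open>?f \<noteq> 0\<close>] vanish by simp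
    moreover have "degree (specialize s r) < degree ?f"
      using assms(1) degree_specialize_le[of s r] \<open>degree ?f = n\<close> by simp
    ultimately show ?thesis by (metis dvd_imp_degree_le leD)
  qed
  have "coeff r k = 0" for k
  proof (rule ccontr)
    assume "coeff r k \<noteq> 0"
    have "?D \<noteq> 0" by (rule resultant_chart_curve_ne_0)
    then have "infinite {s. poly ?D s \<noteq> 0}"
      using poly_roots_finite[of ?D] by (simp add: Compl_eq_Diff_UNIV[symmetric] infinite_UNIV_char_0
          flip: Collect_neg_eq)
    moreover have "{s. poly ?D s \<noteq> 0} \<subseteq> {s. poly (coeff r k) s = 0}"
      using \<open>\<And>s. poly ?D s \<noteq> 0 \<Longrightarrow> specialize s r = 0\<close> by (auto simp: coeff_specialize[symmetric])
    ultimately show False using poly_roots_finite[OF \<open>coeff r k \<noteq> 0\<close>] finite_subset by blast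
  qed
  then show "r = 0" by (simp add: poly_eqI)
qed

lemma chart_curve_dvd:
  assumes "g \<in> vanishing_forms n F m"
  shows "chart a b n F dvd chart a b m g"
proof -
  let ?\<Phi> = "chart a b n F" and ?G = "chart a b m g" and ?c = "eval3 n F a b 1"
  have "?\<Phi> \<noteq> 0" using degree_chart_curve n by auto
  obtain q r where qr: "pseudo_divmod ?G ?\<Phi> = (q, r)" by fastforce
  define e where "e = Suc (degree ?G) - degree ?\<Phi>"
  have eq: "smult [:?c ^ e:] ?G = ?\<Phi> * q + r"
    using pseudo_divmod(1)[OF \<open>?\<Phi> \<noteq> 0\<close> qr] lead_coeff_chart_curve by (simp add: e_def poly_const_pow)
  have "r = 0"
  proof (rule chart_curve_remainder_eq_0)
    show "degree r < n"
      using pseudo_divmod(2)[OF \<open>?\<Phi> \<noteq> 0\<close> qr] n by (auto simp: degree_chart_curve)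
    fix s t assume "poly2 ?\<Phi> s t = 0"
    then have "eval3 n F (1 + a * t) (s + b * t) t = 0" by (simp add: poly2_chart)
    moreover have "(1 + a * t, s + b * t, t) \<noteq> (0, 0, 0)" by auto
    ultimately have "poly2 ?G s t = 0"
      using assms by (simp add: vanishing_forms_def poly2_chart)
    with eq \<open>poly2 ?\<Phi> s t = 0\<close> show "poly2 r s t = 0"
      by (metis add_0 mult_zero_left mult_zero_right poly2_simps(2,4,6))
  qed
  then have "?\<Phi> dvd smult [:1 / ?c ^ e:] (smult [:?c ^ e:] ?G)" using eq by (simp add: dvd_smult)
  then show ?thesis using chart_nonzero by simp
qed

lemma chart_div_curve_add:
  assumes "f \<in> vanishing_forms n F m" "g \<in> vanishing_forms n F m"
  shows "chart a b m (f + g) div chart a b n F = chart a b m f div chart a b n F + chart a b m g div chart a b n F"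
  using assms by (simp add: chart_add chart_curve_dvd)

lemma chart_div_curve_cscale:
  assumes "g \<in> vanishing_forms n F m"
  shows "chart a b m (cscale c g) div chart a b n F = smult [:c:] (chart a b m g div chart a b n F)"
proof -
  have "chart a b n F \<noteq> 0" using degree_chart_curve n by auto
  have "chart a b m (cscale c g) = chart a b n F * smult [:c:] (chart a b m g div chart a b n F)"
    using chart_curve_dvd[OF assms] by (simp add: chart_cscale)
  then show ?thesis by (simp only: nonzero_mult_div_cancel_left[OF \<open>chart a b n F \<noteq> 0\<close>])
qed

lemma bicoeff_chart_div_curve_le:
  assumes "g \<in> vanishing_forms n F m" "bicoeff (chart a b m g div chart a b n F) i k \<noteq> 0"
  shows "i + k + n \<le> m"
proof (rule bicoeff_cofactor_le[OF _ total_degree_le_chart _ assms(2)])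
  show "total_degree_le m (chart a b n F * (chart a b m g div chart a b n F))"
    using chart_curve_dvd[OF assms(1)] total_degree_le_chart[of m a b g] by simp
  show "bicoeff (chart a b n F) 0 n \<noteq> 0"
    using chart_top(2) chart_nonzero by (simp add: bicoeff_def)
qed

lemma dim_vanishing_forms_le:
  "cs.dim (vanishing_forms n F m) \<le> (if n \<le> m then card (monoms (m - n)) else 0)"
proof -
  let ?\<Phi> = "chart a b n F" and ?Z = "vanishing_forms n F m"
  define E where "E = (if n \<le> m then monoms (m - n) else {})"
  define h where "h g = (\<lambda>(i, k, l). if (i, k, l) \<in> E then bicoeff (chart a b m g div ?\<Phi>) i k else 0)"
    for g
  have "cs.dim ?Z \<le> card (monomial3 ` E)"
  proof (rule cs.dim_le_card_of_inj_on[OF subspace_vanishing_forms])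
    show "h (x + y) = h x + h y" if "x \<in> ?Z" "y \<in> ?Z" for x y
      using that by (auto simp: h_def fun_eq_iff bicoeff_def chart_div_curve_add)
    show "h (cscale c x) = cscale c (h x)" if "x \<in> ?Z" for c x
      unfolding h_def chart_div_curve_cscale[OF that] by (auto simp: fun_eq_iff bicoeff_def cscale_def)
    show "inj_on h ?Z"
    proof (rule inj_onI)
      fix x y assume "x \<in> ?Z" "y \<in> ?Z" "h x = h y"
      have "bicoeff (chart a b m x div ?\<Phi>) i k = bicoeff (chart a b m y div ?\<Phi>) i k" for i k
      proof (cases "bicoeff (chart a b m x div ?\<Phi>) i k = 0 \<and> bicoeff (chart a b m y div ?\<Phi>) i k = 0")
        case False
        then have "(i, k, m - n - i - k) \<in> E"
          using bicoeff_chart_div_curve_le \<open>x \<in> ?Z\<close> \<open>y \<in> ?Z\<close> by (fastforce simp: E_def)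
        with fun_cong[OF \<open>h x = h y\<close>, of "(i, k, m - n - i - k)"] show ?thesis by (simp add: h_def)
      qed simp
      then have "chart a b m x div ?\<Phi> = chart a b m y div ?\<Phi>" by (simp add: poly_eqI bicoeff_def)
      then have "chart a b m (x - y) = 0"
        using chart_curve_dvd \<open>x \<in> ?Z\<close> \<open>y \<in> ?Z\<close> by (metis chart_diff dvd_div_mult_self right_minus_eq)
      moreover have "homog m (x - y)"
        using \<open>x \<in> ?Z\<close> \<open>y \<in> ?Z\<close> by (simp add: homog_diff vanishing_forms_def)
      ultimately have "x - y = (\<lambda>_. 0)" by (rule chart_eq_0_imp_eq_0[rotated])
      then have "(x - y) t = 0" for t by simp
      then show "x = y" by (simp add: fun_eq_iff)
    qed
    show "h ` ?Z \<subseteq> cs.span (monomial3 ` E)"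
      by (auto simp: h_def E_def vanishes_outside_def intro!: mem_span_monomials)
  qed (simp add: E_def)
  also have "\<dots> = (if n \<le> m then card (monoms (m - n)) else 0)"
    by (simp add: E_def card_image inj_on_subset[OF inj_monomial3])
  finally show ?thesis .
qed

end

lemma enumerate_finite_subset_of_image:
  assumes "finite B" "B \<subseteq> f ` A"
  obtains q where "\<And>i. i < card B \<Longrightarrow> q i \<in> A" "bij_betw (f \<circ> q) {..<card B} B"
proof -
  obtain e where e: "bij_betw e {..<card B} B"
    using ex_bij_betw_nat_finite[OF assms(1)] by (auto simp: atLeast0LessThan)
  define q where "q i = inv_into A f (e i)" for i
  have "e i \<in> f ` A" if "i < card B" for i
    using e assms(2) that by (auto simp: bij_betw_def)
  then have "q i \<in> A" "f (q i) = e i" if "i < card B" for i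
    using that by (simp_all add: q_def inv_into_into f_inv_into_f)
  moreover have "bij_betw (f \<circ> q) {..<card B} B"
    using e by (rule bij_betw_cong[THEN iffD1, rotated]) (simp add: calculation(2))
  ultimately show ?thesis using that by blast
qed

definition curve_powers :: "nat \<Rightarrow> poly3 \<Rightarrow> nat \<Rightarrow> poly3 set" where
  "curve_powers n F m = (\<lambda>(\<xi>, \<eta>, \<zeta>). ppow (linform \<xi> \<eta> \<zeta>) m) `
     {(\<xi>, \<eta>, \<zeta>). (\<xi>, \<eta>, \<zeta>) \<noteq> (0, 0, 0) \<and> eval3 n F \<xi> \<eta> \<zeta> = 0}"

lemma mem_curve_powers:
  "(\<xi>, \<eta>, \<zeta>) \<noteq> (0, 0, 0) \<Longrightarrow> eval3 n F \<xi> \<eta> \<zeta> = 0 \<Longrightarrow> ppow (linform \<xi> \<eta> \<zeta>) m \<in> curve_powers n F m"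
  unfolding curve_powers_def by (rule image_eqI[of _ _ "(\<xi>, \<eta>, \<zeta>)"]) auto

lemma basis_of_curve_powers:
  assumes "n \<ge> 2" "smooth_curve_poly n F"
  obtains B where "B \<subseteq> curve_powers n F m" "finite B" "cs.independent B" "cs.span B = S_space n F m"
    "card B = r_num n m" "cs.dim (S_space n F m) = r_num n m"
proof -
  let ?S = "S_space n F m" and ?W = "monomial3 ` monoms m"
  let ?k = "if n \<le> m then card (monoms (m - n)) else 0"
  have hF: "homog n F" and F0: "F \<noteq> (\<lambda>_. 0)" using assms(2) by (auto simp: smooth_curve_poly_def)
  obtain a b where ab: "eval3 n F a b 1 \<noteq> 0" using exists_eval3_ne_0_on_chart[OF hF F0] .
  obtain B where B: "B \<subseteq> curve_powers n F m" "cs.independent B" "curve_powers n F m \<subseteq> cs.span B"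
    using cs.maximal_independent_subset by blast
  have S_span: "?S \<subseteq> cs.span ?W" using forms_subset_span by (auto simp: S_space_def forms_def)
  have "curve_powers n F m \<subseteq> ?S" by (auto simp: curve_powers_def ppow_linform_mem_S_space)
  with B(1) have "B \<subseteq> ?S" by (rule subset_trans)
  then have "finite B"
    using cs.independent_span_bound[OF finite_imageI[OF finite_monoms] B(2)] S_span by blast
  have "card (monoms m) \<le> cs.dim (vanishing_forms n F m) + card B"
    using B(3) mem_curve_powers by (intro card_monoms_le_dim_vanishing_forms_add[OF \<open>finite B\<close>]) blast
  also have "\<dots> \<le> ?k + card B" using dim_vanishing_forms_le[OF assms ab] by simp
  finally have lower: "card (monoms m) \<le> ?k + card B" .
  have "card B \<le> cs.dim ?S" by (rule cs.card_le_dim_of_independent[OF \<open>B \<subseteq> ?S\<close> B(2) S_span]) simp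
  moreover have "cs.dim ?S \<le> card (monoms m) - ?k" by (rule dim_S_space_le[OF hF F0])
  moreover have "?k \<le> card (monoms m)" by (simp add: card_monoms binomial_right_mono)
  moreover have "r_num n m = card (monoms m) - ?k" using r_num_eq_diff_choose[OF assms(1)] by (simp add: card_monoms)
  ultimately have "card B = r_num n m" "cs.dim ?S = r_num n m" using lower by linarith+
  moreover have "cs.span B = ?S"
    using \<open>B \<subseteq> ?S\<close> B(2) calculation by (intro cs.span_eq_of_card_ge_dim[OF subspace_S_space S_span]) simp_all
  ultimately show ?thesis using that B(1,2) \<open>finite B\<close> by blast
qed

theorem mainTheorem2:
  fixes n m :: nat and F :: poly3
  assumes "n \<ge> 2" and "smooth_curve_poly n F"
  shows "vector_space.dim cscale (S_space n F m) = r_num n m \<and>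
    (\<exists>\<xi> \<eta> \<zeta> :: nat \<Rightarrow> complex.
       (\<forall>i < r_num n m. (\<xi> i, \<eta> i, \<zeta> i) \<noteq> (0,0,0) \<and> eval3 n F (\<xi> i) (\<eta> i) (\<zeta> i) = 0) \<and>
       inj_on (\<lambda>i. ppow (linform (\<xi> i) (\<eta> i) (\<zeta> i)) m) {..<r_num n m} \<and>
       \<not> module.dependent cscale ((\<lambda>i. ppow (linform (\<xi> i) (\<eta> i) (\<zeta> i)) m) ` {..<r_num n m}) \<and>
       module.span cscale ((\<lambda>i. ppow (linform (\<xi> i) (\<eta> i) (\<zeta> i)) m) ` {..<r_num n m})
         = S_space n F m)"
proof -
  let ?f = "\<lambda>(\<xi>, \<eta>, \<zeta>). ppow (linform \<xi> \<eta> \<zeta>) m"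
  obtain B where B: "B \<subseteq> curve_powers n F m" "finite B" "cs.independent B" "cs.span B = S_space n F m"
    "card B = r_num n m" "cs.dim (S_space n F m) = r_num n m"
    using basis_of_curve_powers[OF assms] .
  obtain q where q: "\<And>i. i < r_num n m \<Longrightarrow> q i \<in> {(\<xi>, \<eta>, \<zeta>). (\<xi>, \<eta>, \<zeta>) \<noteq> (0, 0, 0) \<and> eval3 n F \<xi> \<eta> \<zeta> = 0}"
    and bij: "bij_betw (?f \<circ> q) {..<r_num n m} B"
    using enumerate_finite_subset_of_image[OF B(2) B(1)[unfolded curve_powers_def]] unfolding B(5) by blast
  have "?f \<circ> q = (\<lambda>i. ppow (linform (fst (q i)) (fst (snd (q i))) (snd (snd (q i)))) m)"
    by (simp add: comp_def case_prod_beta)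
  with bij have inj: "inj_on (\<lambda>i. ppow (linform (fst (q i)) (fst (snd (q i))) (snd (snd (q i)))) m) {..<r_num n m}"
    and image: "(\<lambda>i. ppow (linform (fst (q i)) (fst (snd (q i))) (snd (snd (q i)))) m) ` {..<r_num n m} = B"
    by (simp_all add: bij_betw_def)
  show ?thesis
    by (rule conjI[OF B(6)], rule exI[of _ "\<lambda>i. fst (q i)"], rule exI[of _ "\<lambda>i. fst (snd (q i))"],
        rule exI[of _ "\<lambda>i. snd (snd (q i))"]) (use q in \<open>force simp: inj image B(3,4) case_prod_beta\<close>)
qed

end
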